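(* Let $n\ge 2$, $k=\lceil n/2\rceil$, and let $\sigma_n=a_1\cdots a_n$ be the top elementary symmetric polynomial in variables $a_1,\dots,a_n$. Then the polynomials $\ell_1,\dots,\ell_{k-1},\sigma_n\in\mathbb{Q}[a_1,\dots,a_n]$ are algebraically independent over $\mathbb{Q}$, where $\ell_i$ are defined by $\prod_{j=1}^n f(a_jt)=\sum_{i\ge0}\ell_i(a_1,\dots,a_n)t^{2i}$ with $f(t)=t/\tanh t$. Consequently the ring homomorphism $\mathbb{Q}[e,x_1,x_2,\dots]\to\mathbb{Q}[a_1,\dots,a_n,x_k,x_{k+1},\dots]$ given by $e\mapsto a_1\cdots a_n$, $x_i\mapsto\ell_i(a_1,\dots,a_n)$ for $i<k$, and $x_i\mapsto x_i$ for $i\ge k$ is injective.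
   Context: Here $e$, $x_1,x_2,\dots$ and $a_1,\dots,a_n$ are independent polynomial variables. *)

theory Defs
  imports Complex_Main "HOL-Library.Poly_Mapping" "HOL-Computational_Algebra.Formal_Power_Series"
begin

text \<open>Multivariate polynomials over the rationals in variables of type 'v:
  finitely supported maps from monomials (exponent vectors 'v =>0 nat) to coefficients.\<close>
type_synonym 'v mpoly = "('v \<Rightarrow>\<^sub>0 nat) \<Rightarrow>\<^sub>0 rat"

definition mvar :: "'v \<Rightarrow> 'v mpoly" where
  "mvar v = Poly_Mapping.single (Poly_Mapping.single v 1) 1"

definition mconst :: "rat \<Rightarrow> 'v mpoly" where
  "mconst c = Poly_Mapping.single 0 c"

definition mvars :: "'v mpoly \<Rightarrow> 'v set" where
  "mvars P = \<Union> (Poly_Mapping.keys ` Poly_Mapping.keys P)"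

definition meval :: "('v \<Rightarrow> 'w mpoly) \<Rightarrow> 'v mpoly \<Rightarrow> 'w mpoly" where
  "meval g P = (\<Sum>m\<in>Poly_Mapping.keys P.
      mconst (Poly_Mapping.lookup P m) * (\<Prod>v\<in>Poly_Mapping.keys m. g v ^ Poly_Mapping.lookup m v))"

definition alg_indep :: "'i set \<Rightarrow> ('i \<Rightarrow> 'w mpoly) \<Rightarrow> bool" where
  "alg_indep I p \<longleftrightarrow> (\<forall>P. mvars P \<subseteq> I \<longrightarrow> meval p P = 0 \<longrightarrow> P = 0)"

text \<open>The power series f(t) = t / tanh t = cosh t / (sinh t / t) over Q.\<close>
definition fps_cosh :: "rat fps" where
  "fps_cosh = fps_const (1/2) * (fps_exp 1 + fps_exp (-1))"

definition fps_sinh :: "rat fps" where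
  "fps_sinh = fps_const (1/2) * (fps_exp 1 - fps_exp (-1))"

definition f_fps :: "rat fps" where
  "f_fps = fps_cosh * inverse (fps_shift 1 fps_sinh)"

text \<open>f(a t) with a a polynomial variable, as a power series in t with polynomial coefficients.\<close>
definition f_subst :: "'v \<Rightarrow> 'v mpoly fps" where
  "f_subst v = Abs_fps (\<lambda>d. Poly_Mapping.single (Poly_Mapping.single v d) (fps_nth f_fps d))"

definition ell :: "(nat \<Rightarrow> 'v) \<Rightarrow> nat \<Rightarrow> nat \<Rightarrow> 'v mpoly" where
  "ell av n i = fps_nth (\<Prod>j\<in>{1..n}. f_subst (av j)) (2 * i)"

definition sigma_top :: "(nat \<Rightarrow> 'v) \<Rightarrow> nat \<Rightarrow> 'v mpoly" where
  "sigma_top av n = (\<Prod>j\<in>{1..n}. mvar (av j))"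

text \<open>Variables of Q[e, x_1, x_2, ...] and of Q[a_1..a_n, x_k, x_{k+1}, ...].\<close>
datatype svar = E | X nat
datatype tvar = A nat | Y nat

end

theory Submission
  imports Defs
begin

text \<open>Write \<open>e\<^sub>r\<close> for the elementary symmetric polynomials in \<open>a\<^sub>1\<^sup>2, \<dots>, a\<^sub>n\<^sup>2\<close>.
  The series \<open>f = t / tanh t\<close> satisfies \<open>t f' = f + t\<^sup>2 - f\<^sup>2\<close> and \<open>f(t) f(2t) = t\<^sup>2 + f(t)\<^sup>2\<close>,
  so its logarithmic Euler derivative is \<open>\<nu> = 1 + f(2t) - 2 f(t)\<close>, an even series whose
  coefficients \<open>\<nu>\<^sub>2\<^sub>r\<close> are all nonzero because those of \<open>f\<close> alternate in sign. Taking the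
  logarithmic derivative of \<open>\<Prod>\<^sub>j f(a\<^sub>j t)\<close> and comparing with Newton's identities for the
  power sums \<open>p\<^sub>2\<^sub>r = \<Sum>\<^sub>j a\<^sub>j\<^sup>2\<^sup>r\<close> gives \<open>\<ell>\<^sub>r = c\<^sub>r e\<^sub>r + (polynomial in e\<^sub>1, \<dots>, e\<^sub>r\<^sub>-\<^sub>1)\<close> with
  \<open>c\<^sub>r = \<plusminus>\<nu>\<^sub>2\<^sub>r / 2 \<noteq> 0\<close>. Hence \<open>\<sigma>\<^sub>n, \<ell>\<^sub>1, \<dots>, \<ell>\<^sub>k\<^sub>-\<^sub>1\<close> arise from \<open>\<sigma>\<^sub>n, e\<^sub>1, \<dots>, e\<^sub>k\<^sub>-\<^sub>1\<close> by an
  invertible triangular substitution, and the latter are independent because their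
  lexicographic leading monomials \<open>a\<^sub>1 \<cdots> a\<^sub>n\<close> and \<open>a\<^sub>1\<^sup>2 \<cdots> a\<^sub>r\<^sup>2\<close> (\<open>r < k \<le> n\<close>) are
  \<open>\<nat>\<close>-linearly independent. Adjoining fresh variables \<open>x\<^sub>k, x\<^sub>k\<^sub>+\<^sub>1, \<dots>\<close> preserves this.\<close>

unbundle fps_syntax

section \<open>Substitution homomorphisms of multivariate polynomials\<close>

lemma mconst_add: "mconst (a + b) = mconst a + mconst b"
  by (simp add: mconst_def single_add)

lemma mconst_mult: "mconst (a * b) = mconst a * mconst b"
  by (simp add: mconst_def mult_single)

lemma mconst_0 [simp]: "mconst 0 = 0"
  by (simp add: mconst_def)

lemma mconst_1 [simp]: "mconst 1 = 1"
  by (simp add: mconst_def)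

lemma mconst_of_nat: "mconst (of_nat n) = of_nat n"
  by (simp add: mconst_def)

lemma lookup_mconst_mult:
  "Poly_Mapping.lookup (mconst c * p) m = c * Poly_Mapping.lookup p m"
  by (simp add: mconst_def mult_map_scale_conv_mult[symmetric] map.rep_eq when_def)

lemma mconst_mult_single:
  "mconst c * Poly_Mapping.single m 1 = Poly_Mapping.single m c"
  by (simp add: mconst_def mult_single)

definition monom_eval :: "('v \<Rightarrow> 'w mpoly) \<Rightarrow> ('v \<Rightarrow>\<^sub>0 nat) \<Rightarrow> 'w mpoly" where
  "monom_eval g m = (\<Prod>v\<in>Poly_Mapping.keys m. g v ^ Poly_Mapping.lookup m v)"

lemma monom_eval_superset:
  assumes "finite S" "Poly_Mapping.keys m \<subseteq> S"
  shows "monom_eval g m = (\<Prod>v\<in>S. g v ^ Poly_Mapping.lookup m v)"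
  unfolding monom_eval_def
  by (rule prod.mono_neutral_left) (use assms in \<open>auto simp: in_keys_iff\<close>)

lemma keys_add_nat:
  "Poly_Mapping.keys (a + b :: 'v \<Rightarrow>\<^sub>0 nat) = Poly_Mapping.keys a \<union> Poly_Mapping.keys b"
  by (auto simp: in_keys_iff lookup_add)

lemma monom_eval_add: "monom_eval g (a + b) = monom_eval g a * monom_eval g b"
proof -
  let ?S = "Poly_Mapping.keys a \<union> Poly_Mapping.keys b"
  have fin: "finite ?S" by simp
  have "monom_eval g (a + b) = (\<Prod>v\<in>?S. g v ^ Poly_Mapping.lookup (a + b) v)"
    by (rule monom_eval_superset[OF fin]) (simp add: keys_add_nat)
  also have "\<dots> = (\<Prod>v\<in>?S. g v ^ Poly_Mapping.lookup a v) * (\<Prod>v\<in>?S. g v ^ Poly_Mapping.lookup b v)"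
    by (simp add: lookup_add power_add prod.distrib)
  also have "\<dots> = monom_eval g a * monom_eval g b"
    by (simp add: monom_eval_superset[OF fin])
  finally show ?thesis .
qed

lemma meval_monom_eval:
  "meval g P = (\<Sum>m\<in>Poly_Mapping.keys P. mconst (Poly_Mapping.lookup P m) * monom_eval g m)"
  by (simp add: meval_def monom_eval_def)

lemma meval_superset:
  assumes "finite S" "Poly_Mapping.keys P \<subseteq> S"
  shows "meval g P = (\<Sum>m\<in>S. mconst (Poly_Mapping.lookup P m) * monom_eval g m)"
  unfolding meval_monom_eval
  by (rule sum.mono_neutral_left) (use assms in \<open>auto simp: in_keys_iff\<close>)

lemma meval_0 [simp]: "meval g 0 = 0"
  by (simp add: meval_def)

lemma meval_add: "meval g (P + Q) = meval g P + meval g Q"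
proof -
  let ?S = "Poly_Mapping.keys P \<union> Poly_Mapping.keys Q"
  have fin: "finite ?S" by simp
  have "meval g (P + Q) = (\<Sum>m\<in>?S. mconst (Poly_Mapping.lookup (P + Q) m) * monom_eval g m)"
    by (rule meval_superset[OF fin]) (use keys_add[of P Q] in blast)
  also have "\<dots> = meval g P + meval g Q"
    by (simp add: meval_superset[OF fin] lookup_add mconst_add distrib_right sum.distrib)
  finally show ?thesis .
qed

lemma meval_single: "meval g (Poly_Mapping.single m c) = mconst c * monom_eval g m"
  by (cases "c = 0") (simp_all add: meval_monom_eval)

lemma meval_sum: "meval g (sum f B) = (\<Sum>a\<in>B. meval g (f a))"
  by (induction B rule: infinite_finite_induct) (simp_all add: meval_add)

lemma mpoly_sum_singles:
  "P = (\<Sum>m\<in>Poly_Mapping.keys P. Poly_Mapping.single m (Poly_Mapping.lookup P m))"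
  by (rule poly_mapping_eqI) (simp add: lookup_sum lookup_single when_def in_keys_iff)

lemma mpoly_mult_sum_singles:
  "P * Q = (\<Sum>a\<in>Poly_Mapping.keys P. \<Sum>b\<in>Poly_Mapping.keys Q.
      Poly_Mapping.single (a + b) (Poly_Mapping.lookup P a * Poly_Mapping.lookup Q b))"
  by (subst mpoly_sum_singles[of P], subst mpoly_sum_singles[of Q])
     (simp add: sum_product mult_single)

lemma meval_mult: "meval g (P * Q) = meval g P * meval g Q"
proof -
  have "meval g (P * Q) = (\<Sum>a\<in>Poly_Mapping.keys P. \<Sum>b\<in>Poly_Mapping.keys Q.
      mconst (Poly_Mapping.lookup P a) * monom_eval g a *
      (mconst (Poly_Mapping.lookup Q b) * monom_eval g b))"
    by (subst mpoly_mult_sum_singles) (simp add: meval_sum meval_single monom_eval_add mconst_mult mult_ac)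
  also have "\<dots> = meval g P * meval g Q"
    by (simp only: meval_monom_eval sum_product)
  finally show ?thesis .
qed

lemma meval_mvar [simp]: "meval g (mvar v) = g v"
  by (simp add: mvar_def meval_single monom_eval_def)

lemma meval_mconst [simp]: "meval g (mconst c) = mconst c"
  by (simp add: mconst_def meval_single monom_eval_def)

lemma meval_1 [simp]: "meval g 1 = 1"
  using meval_mconst[of g 1] by simp

lemma meval_diff: "meval g (P - Q) = meval g P - meval g Q"
  using meval_add[of g "P - Q" Q] by simp

lemma meval_power: "meval g (P ^ d) = meval g P ^ d"
  by (induction d) (simp_all add: meval_mult)

lemma meval_prod: "meval g (prod f B) = (\<Prod>a\<in>B. meval g (f a))"
  by (induction B rule: infinite_finite_induct) (simp_all add: meval_mult)

lemma meval_meval: "meval g (meval h P) = meval (\<lambda>v. meval g (h v)) P"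
  by (simp only: meval_def[of h P] meval_def[of "\<lambda>v. meval g (h v)" P] meval_sum meval_mult
      meval_prod meval_power meval_mconst)

lemma meval_cong:
  assumes "mvars P \<subseteq> V" "\<And>v. v \<in> V \<Longrightarrow> g v = g' v"
  shows "meval g P = meval g' P"
  unfolding meval_def
proof (intro sum.cong refl arg_cong2[where f = "(*)"] prod.cong)
  fix m v assume "m \<in> Poly_Mapping.keys P" "v \<in> Poly_Mapping.keys m"
  then show "g v ^ Poly_Mapping.lookup m v = g' v ^ Poly_Mapping.lookup m v"
    using assms by (auto simp: mvars_def)
qed

lemma mvars_add: "mvars (P + Q) \<subseteq> mvars P \<union> mvars Q"
  unfolding mvars_def using keys_add[of P Q] by blast

lemma mvars_diff: "mvars (P - Q) \<subseteq> mvars P \<union> mvars Q"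
  using mvars_add[of P "- Q"] by (simp add: mvars_def keys_minus)

lemma mvars_mult: "mvars (P * Q) \<subseteq> mvars P \<union> mvars Q"
proof
  fix v assume "v \<in> mvars (P * Q)"
  then obtain m where m: "m \<in> Poly_Mapping.keys (P * Q)" "v \<in> Poly_Mapping.keys m"
    by (auto simp: mvars_def)
  then obtain a b where "a \<in> Poly_Mapping.keys P" "b \<in> Poly_Mapping.keys Q" "m = a + b"
    using keys_mult[of P Q] by blast
  then show "v \<in> mvars P \<union> mvars Q"
    using m(2) by (auto simp: mvars_def keys_add_nat)
qed

lemma mvars_mconst [simp]: "mvars (mconst c) = {}"
  by (simp add: mvars_def mconst_def)

lemma mvars_mvar [simp]: "mvars (mvar v) = {v}"
  by (simp add: mvars_def mvar_def)

lemma mvars_0 [simp]: "mvars 0 = {}"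
  by (simp add: mvars_def)

lemma mvars_1 [simp]: "mvars 1 = {}"
  using mvars_mconst[of 1] by simp

lemma mvars_sum: "mvars (sum f B) \<subseteq> (\<Union>a\<in>B. mvars (f a))"
proof (induction B rule: infinite_finite_induct)
  case (insert x F)
  then show ?case using mvars_add[of "f x" "sum f F"] by auto
qed auto

lemma mvars_prod: "mvars (prod f B) \<subseteq> (\<Union>a\<in>B. mvars (f a))"
proof (induction B rule: infinite_finite_induct)
  case (insert x F)
  then show ?case using mvars_mult[of "f x" "prod f F"] by auto
qed auto

lemma mvars_power: "mvars (P ^ d) \<subseteq> mvars P"
proof (induction d)
  case (Suc d)
  then show ?case using mvars_mult[of P "P ^ d"] by auto
qed auto

lemma mvars_meval: "mvars (meval h P) \<subseteq> (\<Union>v\<in>mvars P. mvars (h v))"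
proof -
  have "mvars (mconst (Poly_Mapping.lookup P m) * monom_eval h m) \<subseteq> (\<Union>v\<in>mvars P. mvars (h v))"
    if m: "m \<in> Poly_Mapping.keys P" for m
  proof -
    have "mvars (monom_eval h m) \<subseteq> (\<Union>v\<in>Poly_Mapping.keys m. mvars (h v ^ Poly_Mapping.lookup m v))"
      unfolding monom_eval_def by (rule mvars_prod)
    also have "\<dots> \<subseteq> (\<Union>v\<in>mvars P. mvars (h v))"
    proof (rule UN_least)
      fix v assume "v \<in> Poly_Mapping.keys m"
      then have "v \<in> mvars P" using m by (auto simp: mvars_def)
      then show "mvars (h v ^ Poly_Mapping.lookup m v) \<subseteq> (\<Union>v\<in>mvars P. mvars (h v))"
        using mvars_power[of "h v"] by blast
    qed
    finally show ?thesis
      using mvars_mult[of "mconst (Poly_Mapping.lookup P m)" "monom_eval h m"] by simp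
  qed
  then show ?thesis
    unfolding meval_monom_eval by (intro order.trans[OF mvars_sum] UN_least)
qed

section \<open>Leading monomials and algebraic independence\<close>

text \<open>Monomials are compared lexicographically, a smaller variable having priority:
  \<open>a < b\<close> makes \<open>a\<close> larger than any power of \<open>b\<close>.\<close>

definition lead_mon :: "'v::linorder mpoly \<Rightarrow> ('v \<Rightarrow>\<^sub>0 nat)" where
  "lead_mon P = Max (Poly_Mapping.keys P)"

definition lead_coef :: "'v::linorder mpoly \<Rightarrow> rat" where
  "lead_coef P = Poly_Mapping.lookup P (lead_mon P)"

lemma lead_mon_in_keys: "P \<noteq> 0 \<Longrightarrow> lead_mon P \<in> Poly_Mapping.keys P"
  unfolding lead_mon_def by (rule Max_in) auto

lemma le_lead_mon: "m \<in> Poly_Mapping.keys P \<Longrightarrow> m \<le> lead_mon P"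
  unfolding lead_mon_def by (rule Max_ge) auto

lemma lead_coef_nonzero: "P \<noteq> 0 \<Longrightarrow> lead_coef P \<noteq> 0"
  using lead_mon_in_keys[of P] by (simp add: lead_coef_def in_keys_iff)

lemma lookup_greater_lead_mon: "lead_mon P < m \<Longrightarrow> Poly_Mapping.lookup P m = 0"
  using le_lead_mon[of m P] by (force simp: in_keys_iff)

lemma single_eq_0_iff [simp]: "Poly_Mapping.single m c = 0 \<longleftrightarrow> c = 0"
  by (metis lookup_single_eq single_zero)

lemma lead_mon_single: "c \<noteq> 0 \<Longrightarrow> lead_mon (Poly_Mapping.single m c :: 'v::linorder mpoly) = m"
  by (simp add: lead_mon_def)

lemma lead_mon_1: "lead_mon (1 :: 'v::linorder mpoly) = 0"
  by (simp add: lead_mon_def)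

lemma lead_mon_mvar: "lead_mon (mvar v :: 'v::linorder mpoly) = Poly_Mapping.single v 1"
  by (simp add: mvar_def lead_mon_single)

lemma mvar_nonzero [simp]: "mvar v \<noteq> 0"
  by (simp add: mvar_def)

lemma lead_mon_eqI:
  assumes "m \<in> Poly_Mapping.keys P" "\<And>m'. m' \<in> Poly_Mapping.keys P \<Longrightarrow> m' \<le> m"
  shows "lead_mon P = m"
  using assms unfolding lead_mon_def by (intro Max_eqI) auto

lemma add_eq_lead_mons_imp:
  fixes P Q :: "'v::linorder mpoly"
  assumes "a \<in> Poly_Mapping.keys P" "b \<in> Poly_Mapping.keys Q" "a + b = lead_mon P + lead_mon Q"
  shows "a = lead_mon P \<and> b = lead_mon Q"
proof -
  have "a \<le> lead_mon P" "b \<le> lead_mon Q"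
    using assms(1,2) by (simp_all add: le_lead_mon)
  have "a = lead_mon P"
  proof (rule ccontr)
    assume "a \<noteq> lead_mon P"
    then have "a + b < lead_mon P + b"
      using \<open>a \<le> lead_mon P\<close> by (simp add: add_strict_right_mono)
    also have "\<dots> \<le> lead_mon P + lead_mon Q"
      using \<open>b \<le> lead_mon Q\<close> by (rule add_left_mono)
    finally show False using assms(3) by simp
  qed
  then show ?thesis using assms(3) by simp
qed

lemma lookup_mult_lead_mons:
  fixes P Q :: "'v::linorder mpoly"
  assumes P: "P \<noteq> 0" and Q: "Q \<noteq> 0"
  shows "Poly_Mapping.lookup (P * Q) (lead_mon P + lead_mon Q) = lead_coef P * lead_coef Q"
proof -
  let ?s = "lead_mon P + lead_mon Q"
  have "Poly_Mapping.lookup (P * Q) ?s = (\<Sum>a\<in>Poly_Mapping.keys P. \<Sum>b\<in>Poly_Mapping.keys Q.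
      (if a + b = ?s then Poly_Mapping.lookup P a * Poly_Mapping.lookup Q b else 0))"
    by (subst mpoly_mult_sum_singles) (simp add: lookup_sum lookup_single when_def)
  also have "\<dots> = (\<Sum>b\<in>Poly_Mapping.keys Q.
      (if lead_mon P + b = ?s then Poly_Mapping.lookup P (lead_mon P) * Poly_Mapping.lookup Q b else 0))"
    using lead_mon_in_keys[OF P] add_eq_lead_mons_imp
    by (intro sum.mono_neutral_right[of _ "{lead_mon P}", simplified] ballI sum.neutral) auto
  also have "\<dots> = lead_coef P * lead_coef Q"
    using lead_mon_in_keys[OF Q] add_eq_lead_mons_imp[OF lead_mon_in_keys[OF P]]
    by (subst sum.mono_neutral_right[of _ "{lead_mon Q}", simplified]) (auto simp: lead_coef_def)
  finally show ?thesis .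
qed

lemma lead_mon_mult:
  fixes P Q :: "'v::linorder mpoly"
  assumes P: "P \<noteq> 0" and Q: "Q \<noteq> 0"
  shows "lead_mon (P * Q) = lead_mon P + lead_mon Q"
proof (rule lead_mon_eqI)
  show "lead_mon P + lead_mon Q \<in> Poly_Mapping.keys (P * Q)"
    using lookup_mult_lead_mons[OF P Q] lead_coef_nonzero[OF P] lead_coef_nonzero[OF Q]
    by (simp add: in_keys_iff)
  show "m \<le> lead_mon P + lead_mon Q" if m: "m \<in> Poly_Mapping.keys (P * Q)" for m
  proof -
    obtain a b where "a \<in> Poly_Mapping.keys P" "b \<in> Poly_Mapping.keys Q" "m = a + b"
      using keys_mult[of P Q] m by blast
    then show ?thesis by (simp add: add_mono le_lead_mon)
  qed
qed

lemma lead_mon_prod: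
  fixes h :: "'i \<Rightarrow> 'v::linorder mpoly"
  assumes "finite B" "\<And>i. i \<in> B \<Longrightarrow> h i \<noteq> 0"
  shows "prod h B \<noteq> 0 \<and> lead_mon (prod h B) = (\<Sum>i\<in>B. lead_mon (h i))"
  using assms by (induction B rule: finite_induct) (simp_all add: lead_mon_1 lead_mon_mult)

lemma lead_mon_add_lower:
  fixes P Q :: "'v::linorder mpoly"
  assumes P: "P \<noteq> 0" and Q: "\<And>m. m \<in> Poly_Mapping.keys Q \<Longrightarrow> m < lead_mon P"
  shows "P + Q \<noteq> 0" "lead_mon (P + Q) = lead_mon P"
proof -
  have "Poly_Mapping.lookup Q (lead_mon P) = 0"
    using Q by (auto simp: in_keys_iff)
  then have top: "lead_mon P \<in> Poly_Mapping.keys (P + Q)"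
    using lead_coef_nonzero[OF P] by (simp add: in_keys_iff lookup_add lead_coef_def)
  then show "P + Q \<noteq> 0" by auto
  show "lead_mon (P + Q) = lead_mon P"
  proof (rule lead_mon_eqI[OF top])
    show "m \<le> lead_mon P" if "m \<in> Poly_Mapping.keys (P + Q)" for m
      using keys_add[of P Q] that le_lead_mon[of m P] Q[of m] by fastforce
  qed
qed

definition lead_exp :: "('i \<Rightarrow> 'v::linorder mpoly) \<Rightarrow> ('i \<Rightarrow>\<^sub>0 nat) \<Rightarrow> 'v \<Rightarrow> nat" where
  "lead_exp h \<alpha> v = (\<Sum>i\<in>Poly_Mapping.keys \<alpha>. Poly_Mapping.lookup \<alpha> i * Poly_Mapping.lookup (lead_mon (h i)) v)"

lemma lead_mon_monom_eval:
  fixes h :: "'i \<Rightarrow> 'v::linorder mpoly"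
  assumes "\<And>i. i \<in> Poly_Mapping.keys \<alpha> \<Longrightarrow> h i \<noteq> 0"
  shows "monom_eval h \<alpha> \<noteq> 0" "Poly_Mapping.lookup (lead_mon (monom_eval h \<alpha>)) = lead_exp h \<alpha>"
proof -
  have pow: "h i ^ d \<noteq> 0 \<and> lead_mon (h i ^ d) = (\<Sum>_<d. lead_mon (h i))"
    if "i \<in> Poly_Mapping.keys \<alpha>" for i d
    using lead_mon_prod[of "{..<d}" "\<lambda>_. h i"] assms[OF that] by simp
  have "monom_eval h \<alpha> \<noteq> 0 \<and>
      lead_mon (monom_eval h \<alpha>) = (\<Sum>i\<in>Poly_Mapping.keys \<alpha>. lead_mon (h i ^ Poly_Mapping.lookup \<alpha> i))"
    unfolding monom_eval_def by (rule lead_mon_prod) (use pow in auto)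
  then show "monom_eval h \<alpha> \<noteq> 0" "Poly_Mapping.lookup (lead_mon (monom_eval h \<alpha>)) = lead_exp h \<alpha>"
    by (auto simp: pow lead_exp_def lookup_sum)
qed

lemma sum_distinct_lead_mons_nonzero:
  fixes Q :: "'a \<Rightarrow> 'v::linorder mpoly"
  assumes fin: "finite M" and "M \<noteq> {}" and nz: "\<And>m. m \<in> M \<Longrightarrow> Q m \<noteq> 0 \<and> c m \<noteq> 0"
    and inj: "inj_on (\<lambda>m. lead_mon (Q m)) M"
  shows "(\<Sum>m\<in>M. mconst (c m) * Q m) \<noteq> 0"
proof -
  let ?L = "\<lambda>m. lead_mon (Q m)"
  have fin_L: "finite (?L ` M)" and ne_L: "?L ` M \<noteq> {}"
    using fin \<open>M \<noteq> {}\<close> by simp_all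
  obtain m0 where m0: "m0 \<in> M" "?L m0 = Max (?L ` M)"
    using Max_in[OF fin_L ne_L] by auto
  have less: "?L m < ?L m0" if "m \<in> M" "m \<noteq> m0" for m
  proof -
    have "?L m \<le> ?L m0" using m0(2) Max_ge[of "?L ` M"] fin that(1) by simp
    moreover have "?L m \<noteq> ?L m0" using inj_onD[OF inj _ that(1) m0(1)] that(2) by blast
    ultimately show ?thesis by simp
  qed
  have "Poly_Mapping.lookup (\<Sum>m\<in>M. mconst (c m) * Q m) (?L m0) =
      (\<Sum>m\<in>M. c m * Poly_Mapping.lookup (Q m) (?L m0))"
    by (simp add: lookup_sum lookup_mconst_mult)
  also have "\<dots> = c m0 * lead_coef (Q m0)"
    using m0(1) less fin by (subst sum.mono_neutral_right[of M "{m0}"])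
      (auto simp: lookup_greater_lead_mon lead_coef_def)
  also have "\<dots> \<noteq> 0"
    using nz[OF m0(1)] lead_coef_nonzero[of "Q m0"] by simp
  finally show ?thesis by auto
qed

lemma alg_indep_lead_exp:
  fixes h :: "'i \<Rightarrow> 'v::linorder mpoly"
  assumes nz: "\<And>i. i \<in> I \<Longrightarrow> h i \<noteq> 0"
    and inj: "\<And>\<alpha> \<beta>. Poly_Mapping.keys \<alpha> \<subseteq> I \<Longrightarrow> Poly_Mapping.keys \<beta> \<subseteq> I \<Longrightarrow>
      lead_exp h \<alpha> = lead_exp h \<beta> \<Longrightarrow> \<alpha> = \<beta>"
  shows "alg_indep I h"
  unfolding alg_indep_def
proof (intro allI impI)
  fix P :: "'i mpoly"
  assume vars: "mvars P \<subseteq> I" and ev: "meval h P = 0"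
  let ?M = "Poly_Mapping.keys P"
  have keys_I: "Poly_Mapping.keys m \<subseteq> I" if "m \<in> ?M" for m
    using vars that by (auto simp: mvars_def)
  then have nz_m: "\<And>i. i \<in> Poly_Mapping.keys m \<Longrightarrow> h i \<noteq> 0" if "m \<in> ?M" for m
    using nz that by blast
  have inj_L: "inj_on (\<lambda>m. lead_mon (monom_eval h m)) ?M"
  proof (rule inj_onI)
    fix m m' assume m: "m \<in> ?M" and m': "m' \<in> ?M"
      and "lead_mon (monom_eval h m) = lead_mon (monom_eval h m')"
    then have "lead_exp h m = lead_exp h m'"
      using lead_mon_monom_eval(2)[of m h] lead_mon_monom_eval(2)[of m' h] nz_m[OF m] nz_m[OF m']
      by simp
    then show "m = m'" using inj keys_I m m' by blast
  qed
  show "P = 0"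
  proof (rule ccontr)
    assume "P \<noteq> 0"
    have "meval h P \<noteq> 0"
      unfolding meval_monom_eval
    proof (rule sum_distinct_lead_mons_nonzero[OF finite_keys _ _ inj_L])
      show "Poly_Mapping.keys P \<noteq> {}" using \<open>P \<noteq> 0\<close> by simp
      show "monom_eval h m \<noteq> 0 \<and> Poly_Mapping.lookup P m \<noteq> 0" if "m \<in> ?M" for m
        using lead_mon_monom_eval(1)[OF nz_m[OF that]] that by (simp add: in_keys_iff)
    qed
    then show False using ev by simp
  qed
qed

lemma lead_exp_shift:
  fixes h :: "'i \<Rightarrow> 'v::linorder mpoly"
  assumes "Poly_Mapping.keys \<alpha> \<subseteq> I"
    and "\<And>i. i \<in> I \<Longrightarrow> Poly_Mapping.lookup (lead_mon (h i)) v = g i + (if i = t then c else 0)"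
  shows "lead_exp h \<alpha> v = (\<Sum>i\<in>Poly_Mapping.keys \<alpha>. Poly_Mapping.lookup \<alpha> i * g i) + Poly_Mapping.lookup \<alpha> t * c"
proof -
  have "lead_exp h \<alpha> v = (\<Sum>i\<in>Poly_Mapping.keys \<alpha>.
      Poly_Mapping.lookup \<alpha> i * g i + (if t = i then Poly_Mapping.lookup \<alpha> t * c else 0))"
    unfolding lead_exp_def using assms by (intro sum.cong) (auto simp: algebra_simps)
  then show ?thesis
    by (simp add: sum.distrib in_keys_iff)
qed

lemma alg_indep_distinct_vars:
  fixes h :: "'i \<Rightarrow> 'v::linorder mpoly"
  assumes "\<And>i. i \<in> I \<Longrightarrow> h i \<noteq> 0 \<and> lead_mon (h i) = Poly_Mapping.single (\<phi> i) 1"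
    and "inj_on \<phi> I"
  shows "alg_indep I h"
proof (rule alg_indep_lead_exp)
  fix \<alpha> \<beta> :: "'i \<Rightarrow>\<^sub>0 nat"
  assume \<alpha>: "Poly_Mapping.keys \<alpha> \<subseteq> I" and \<beta>: "Poly_Mapping.keys \<beta> \<subseteq> I"
    and eq: "lead_exp h \<alpha> = lead_exp h \<beta>"
  show "\<alpha> = \<beta>"
  proof (rule poly_mapping_eqI)
    fix t
    show "Poly_Mapping.lookup \<alpha> t = Poly_Mapping.lookup \<beta> t"
    proof (cases "t \<in> I")
      case True
      have shift: "Poly_Mapping.lookup (lead_mon (h i)) (\<phi> t) = 0 + (if i = t then 1 else 0)"
        if "i \<in> I" for i
        using assms inj_onD[OF assms(2) _ that True] that by (auto simp: lookup_single when_def)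
      show ?thesis
        using lead_exp_shift[OF \<alpha> shift] lead_exp_shift[OF \<beta> shift] fun_cong[OF eq, of "\<phi> t"]
        by simp
    next
      case False
      then have "t \<notin> Poly_Mapping.keys \<alpha>" "t \<notin> Poly_Mapping.keys \<beta>"
        using \<alpha> \<beta> by auto
      then show ?thesis by (simp add: in_keys_iff)
    qed
  qed
qed (use assms in blast)

lemma alg_indep_separated_lead_mons:
  fixes h :: "'i \<Rightarrow> 'v::linorder mpoly"
  assumes nz: "\<And>i. i \<in> I \<Longrightarrow> h i \<noteq> 0"
    and sep: "\<And>t. t \<in> I \<Longrightarrow> \<exists>v w c. 0 < c \<and> (\<forall>i\<in>I.
      Poly_Mapping.lookup (lead_mon (h i)) v = Poly_Mapping.lookup (lead_mon (h i)) w + (if i = t then c else 0))"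
  shows "alg_indep I h"
proof (rule alg_indep_lead_exp[OF nz])
  fix \<alpha> \<beta> :: "'i \<Rightarrow>\<^sub>0 nat"
  assume \<alpha>: "Poly_Mapping.keys \<alpha> \<subseteq> I" and \<beta>: "Poly_Mapping.keys \<beta> \<subseteq> I"
    and eq: "lead_exp h \<alpha> = lead_exp h \<beta>"
  show "\<alpha> = \<beta>"
  proof (rule poly_mapping_eqI)
    fix t
    show "Poly_Mapping.lookup \<alpha> t = Poly_Mapping.lookup \<beta> t"
    proof (cases "t \<in> I")
      case True
      then obtain v w c where "0 < c" and shift: "\<And>i. i \<in> I \<Longrightarrow>
        Poly_Mapping.lookup (lead_mon (h i)) v = Poly_Mapping.lookup (lead_mon (h i)) w + (if i = t then c else 0)"
        using sep by blast
      have "lead_exp h \<gamma> v = lead_exp h \<gamma> w + Poly_Mapping.lookup \<gamma> t * c"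
        if "Poly_Mapping.keys \<gamma> \<subseteq> I" for \<gamma>
        using lead_exp_shift[OF that shift] by (simp add: lead_exp_def)
      then have "Poly_Mapping.lookup \<alpha> t * c = Poly_Mapping.lookup \<beta> t * c"
        using \<alpha> \<beta> eq by (metis add_left_cancel)
      then show ?thesis using \<open>0 < c\<close> by simp
    next
      case False
      then have "t \<notin> Poly_Mapping.keys \<alpha>" "t \<notin> Poly_Mapping.keys \<beta>"
        using \<alpha> \<beta> by auto
      then show ?thesis by (simp add: in_keys_iff)
    qed
  qed
qed

lemma alg_indep_meval:
  assumes "alg_indep J g" "alg_indep I T" "\<And>i. i \<in> I \<Longrightarrow> mvars (T i) \<subseteq> J"
  shows "alg_indep I (\<lambda>i. meval g (T i))"
  unfolding alg_indep_def
proof (intro allI impI)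
  fix P assume vars: "mvars P \<subseteq> I" and "meval (\<lambda>i. meval g (T i)) P = 0"
  then have "meval g (meval T P) = 0"
    by (simp add: meval_meval)
  moreover have "mvars (meval T P) \<subseteq> J"
    using mvars_meval[of T P] vars assms(3) by blast
  ultimately have "meval T P = 0"
    using assms(1) by (simp add: alg_indep_def)
  then show "P = 0"
    using assms(2) vars by (simp add: alg_indep_def)
qed

lemma alg_indep_cong:
  assumes "alg_indep I g" "\<And>i. i \<in> I \<Longrightarrow> g i = h i"
  shows "alg_indep I h"
  using assms meval_cong[of _ I g h] by (simp add: alg_indep_def)

lemma alg_indep_imp_inj_on:
  assumes "alg_indep I g"
  shows "inj_on (meval g) {P. mvars P \<subseteq> I}"
proof (rule inj_onI)
  fix P Q assume "P \<in> {P. mvars P \<subseteq> I}" "Q \<in> {P. mvars P \<subseteq> I}" "meval g P = meval g Q"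
  then have "mvars (P - Q) \<subseteq> I" "meval g (P - Q) = 0"
    using mvars_diff[of P Q] by (auto simp: meval_diff)
  then have "P - Q = 0"
    using assms unfolding alg_indep_def by blast
  then show "P = Q" by simp
qed

definition fps_euler :: "'a::comm_ring_1 fps \<Rightarrow> 'a fps" where
  "fps_euler F = fps_X * fps_deriv F"

lemma fps_euler_nth [simp]: "fps_euler F $ n = of_nat n * F $ n"
  by (cases n) (simp_all add: fps_euler_def)

lemma fps_euler_mult: "fps_euler (F * G) = fps_euler F * G + F * fps_euler G"
  by (simp add: fps_euler_def algebra_simps)

lemma fps_euler_prod:
  assumes "finite J" "\<And>j. j \<in> J \<Longrightarrow> fps_euler (F j) = F j * N j"
  shows "fps_euler (\<Prod>j\<in>J. F j) = (\<Prod>j\<in>J. F j) * (\<Sum>j\<in>J. N j)"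
  using assms
proof (induction J rule: finite_induct)
  case (insert x J)
  then show ?case
    by (simp add: fps_euler_mult algebra_simps)
qed (simp add: fps_euler_def)

definition fps_dilate :: "'a::comm_semiring_1 \<Rightarrow> 'a fps \<Rightarrow> 'a fps" where
  "fps_dilate q F = Abs_fps (\<lambda>n. q ^ n * F $ n)"

lemma fps_dilate_nth [simp]: "fps_dilate q F $ n = q ^ n * F $ n"
  by (simp add: fps_dilate_def)

lemma fps_dilate_add: "fps_dilate q (F + G) = fps_dilate q F + fps_dilate q G"
  by (rule fps_ext) (simp add: distrib_left)

lemma fps_dilate_diff: "fps_dilate q (F - G :: 'a::comm_ring_1 fps) = fps_dilate q F - fps_dilate q G"
  by (rule fps_ext) (simp add: right_diff_distrib)

lemma fps_dilate_mult: "fps_dilate q (F * G) = fps_dilate q F * fps_dilate q G"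
proof (rule fps_ext)
  fix n
  have "fps_dilate q (F * G) $ n = (\<Sum>i=0..n. (q ^ i * F $ i) * (q ^ (n - i) * G $ (n - i)))"
    by (simp add: fps_mult_nth sum_distrib_left algebra_simps flip: power_add)
  then show "fps_dilate q (F * G) $ n = (fps_dilate q F * fps_dilate q G) $ n"
    by (simp add: fps_mult_nth)
qed

lemma fps_dilate_const [simp]: "fps_dilate q (fps_const c) = fps_const c"
  by (rule fps_ext) simp

lemma fps_dilate_X: "fps_dilate q fps_X = fps_const q * fps_X"
proof (rule fps_ext)
  fix n show "fps_dilate q fps_X $ n = (fps_const q * fps_X) $ n"
    by (cases "n = 1") (simp_all add: fps_X_nth)
qed

lemma fps_dilate_exp: "fps_dilate q (fps_exp c) = fps_exp (q * c :: 'a::field_char_0)"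
  by (rule fps_ext) (simp add: power_mult_distrib)

section \<open>The series \<open>t / tanh t\<close>\<close>

definition fps_sinhc :: "rat fps" where
  "fps_sinhc = fps_shift 1 fps_sinh"

lemma fps_const_half_times_2: "fps_const (1/2::rat) * 2 = 1"
  by (rule fps_ext) (simp add: fps_numeral_nth)

lemma fps_two_nonzero: "(2::rat fps) \<noteq> 0"
  by (metis fps_const_half_times_2 mult_zero_right zero_neq_one)

lemma fps_const_minus_1: "fps_const (-1::rat) = - 1"
  by (rule fps_ext) simp

lemma fps_euler_cosh: "fps_euler fps_cosh = fps_X * fps_sinh"
  by (simp add: fps_cosh_def fps_sinh_def fps_euler_def algebra_simps fps_const_minus_1
      del: fps_const_neg)

lemma fps_euler_sinh: "fps_euler fps_sinh = fps_X * fps_cosh"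
  by (simp add: fps_cosh_def fps_sinh_def fps_euler_def algebra_simps fps_const_minus_1
      del: fps_const_neg)

lemma fps_dilate_2_exp: "fps_dilate 2 (fps_exp c) = fps_exp c * fps_exp (c :: rat)"
  by (simp add: fps_dilate_exp flip: fps_exp_add_mult)

lemma fps_dilate_2_cosh: "fps_dilate 2 fps_cosh = fps_cosh * fps_cosh + fps_sinh * fps_sinh"
proof -
  have "fps_dilate 2 fps_cosh = fps_const (1/2) * (fps_exp 1 * fps_exp 1 + fps_exp (-1) * fps_exp (-1))"
    by (simp only: fps_cosh_def fps_dilate_mult fps_dilate_add fps_dilate_2_exp fps_dilate_const)
  then show ?thesis
    using fps_const_half_times_2 unfolding fps_cosh_def fps_sinh_def by algebra
qed

lemma fps_dilate_2_sinh: "fps_dilate 2 fps_sinh = 2 * fps_sinh * fps_cosh"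
proof -
  have "fps_dilate 2 fps_sinh = fps_const (1/2) * (fps_exp 1 * fps_exp 1 - fps_exp (-1) * fps_exp (-1))"
    by (simp only: fps_sinh_def fps_dilate_mult fps_dilate_diff fps_dilate_2_exp fps_dilate_const)
  then show ?thesis
    using fps_const_half_times_2 unfolding fps_cosh_def fps_sinh_def by algebra
qed

lemma fps_cosh_nth_0: "fps_cosh $ 0 = 1"
  by (simp add: fps_cosh_def)

lemma fps_sinh_nth_0: "fps_sinh $ 0 = 0"
  by (simp add: fps_sinh_def)

lemma fps_sinhc_nth_0: "fps_sinhc $ 0 = 1"
  by (simp add: fps_sinhc_def fps_sinh_def)

lemma fps_sinh_eq: "fps_sinh = fps_X * fps_sinhc"
  by (rule fps_ext) (simp add: fps_sinhc_def fps_sinh_nth_0)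

lemma fps_sinhc_nonzero: "fps_sinhc \<noteq> 0"
  using fps_sinhc_nth_0 by auto

lemma fps_cosh_nonzero: "fps_cosh \<noteq> 0"
  using fps_cosh_nth_0 by auto

lemma f_fps_times_sinhc: "f_fps * fps_sinhc = fps_cosh"
  using inverse_mult_eq_1[of fps_sinhc] fps_sinhc_nth_0
  by (simp add: f_fps_def fps_sinhc_def mult.assoc)

lemma f_fps_nth_0: "f_fps $ 0 = 1"
  unfolding f_fps_def fps_sinhc_def[symmetric] fps_mult_nth_0 fps_inverse_nth_0 fps_sinhc_nth_0
    fps_cosh_nth_0 by simp

lemma fps_euler_sinhc: "fps_euler fps_sinhc = fps_cosh - fps_sinhc"
proof -
  have "fps_X * fps_cosh = fps_X * fps_sinhc + fps_X * fps_euler fps_sinhc"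
    by (metis fps_euler_sinh fps_sinh_eq fps_euler_mult fps_euler_def fps_deriv_fps_X mult_1_right)
  then have "fps_X * fps_euler fps_sinhc = fps_X * (fps_cosh - fps_sinhc)"
    by (simp add: algebra_simps)
  then show ?thesis by simp
qed

lemma f_fps_riccati: "fps_euler f_fps = f_fps + fps_X^2 - f_fps * f_fps"
proof -
  have "fps_euler f_fps * fps_sinhc + f_fps * fps_euler fps_sinhc = fps_euler fps_cosh"
    by (simp flip: f_fps_times_sinhc add: fps_euler_mult)
  then have "fps_euler f_fps * fps_sinhc = fps_X^2 * fps_sinhc - f_fps * (fps_cosh - fps_sinhc)"
    by (simp add: fps_euler_cosh fps_sinh_eq fps_euler_sinhc power2_eq_square algebra_simps)
  also have "\<dots> = (f_fps + fps_X^2 - f_fps * f_fps) * fps_sinhc"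
    by (simp flip: f_fps_times_sinhc add: algebra_simps)
  finally show ?thesis using fps_sinhc_nonzero by simp
qed

text \<open>This is \<open>coth 2t = (1 + coth\<^sup>2 t) / (2 coth t)\<close>.\<close>

lemma f_fps_doubling: "f_fps * fps_dilate 2 f_fps = fps_X^2 + f_fps * f_fps"
proof -
  have "fps_X * (2 * fps_dilate 2 fps_sinhc) = fps_X * (2 * (fps_sinhc * fps_cosh))"
    using fps_dilate_2_sinh
    by (simp add: fps_sinh_eq fps_dilate_mult fps_dilate_X algebra_simps numeral_fps_const)
  then have sinhc2: "fps_dilate 2 fps_sinhc = fps_sinhc * fps_cosh"
    using fps_two_nonzero by simp
  have f2: "fps_dilate 2 f_fps * fps_sinhc * fps_cosh = fps_cosh * fps_cosh + fps_sinh * fps_sinh"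
    using arg_cong[OF f_fps_times_sinhc, of "fps_dilate 2"]
    by (simp add: fps_dilate_mult sinhc2 fps_dilate_2_cosh mult.assoc)
  have "(f_fps * fps_dilate 2 f_fps) * (fps_sinhc * fps_sinhc * fps_cosh) =
      (f_fps * fps_sinhc) * (fps_dilate 2 f_fps * fps_sinhc * fps_cosh)"
    by (simp add: algebra_simps)
  also have "\<dots> = fps_cosh * (fps_cosh * fps_cosh + fps_sinh * fps_sinh)"
    by (simp add: f_fps_times_sinhc f2)
  also have "\<dots> = (fps_X^2 + f_fps * f_fps) * (fps_sinhc * fps_sinhc * fps_cosh)"
    by (simp add: fps_sinh_eq power2_eq_square algebra_simps flip: f_fps_times_sinhc)
  finally show ?thesis
    using fps_sinhc_nonzero fps_cosh_nonzero by simp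
qed

lemma sum_even_indices:
  fixes g :: "nat \<Rightarrow> 'a::comm_monoid_add"
  assumes "\<And>i. odd i \<Longrightarrow> g i = 0"
  shows "(\<Sum>i=m..n. g i) = (\<Sum>j=(m + 1) div 2..n div 2. g (2 * j))"
proof -
  have "(\<Sum>i=m..n. g i) = (\<Sum>i\<in>{m..n} \<inter> {i. even i}. g i)"
    using assms by (intro sum.mono_neutral_right) auto
  also have "{m..n} \<inter> {i. even i} = (*) 2 ` {(m + 1) div 2..n div 2}"
  proof (intro equalityI subsetI)
    fix i assume "i \<in> {m..n} \<inter> {i. even i}"
    then show "i \<in> (*) 2 ` {(m + 1) div 2..n div 2}"
      by (auto elim!: evenE intro!: image_eqI)
  next
    fix i assume "i \<in> (*) 2 ` {(m + 1) div 2..n div 2}"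
    then obtain j where "i = 2 * j" "(m + 1) div 2 \<le> j" "j \<le> n div 2" by auto
    moreover have "m \<le> 2 * j" "2 * j \<le> n" using calculation by presburger+
    ultimately show "i \<in> {m..n} \<inter> {i. even i}" by simp
  qed
  also have "(\<Sum>i\<in>(*) 2 ` {(m + 1) div 2..n div 2}. g i) = (\<Sum>j=(m + 1) div 2..n div 2. g (2 * j))"
    by (rule sum.reindex_cong[OF inj_on_mult]) simp_all
  finally show ?thesis .
qed

lemma f_fps_coeff_rec:
  assumes "1 \<le> n"
  shows "of_nat (n + 1) * f_fps $ n = (if n = 2 then 1 else 0) - (\<Sum>i=1..n-1. f_fps $ i * f_fps $ (n - i))"
proof -
  have "of_nat n * f_fps $ n = f_fps $ n + (if n = 2 then 1 else 0) - (\<Sum>i=0..n. f_fps $ i * f_fps $ (n - i))"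
    using arg_cong[OF f_fps_riccati, of "\<lambda>F. F $ n"] by (simp add: fps_mult_nth)
  moreover have "(\<Sum>i=0..n. f_fps $ i * f_fps $ (n - i)) = 2 * f_fps $ n + (\<Sum>i=1..n-1. f_fps $ i * f_fps $ (n - i))"
  proof -
    obtain m where n: "n = Suc m" using assms by (cases n) auto
    have "(\<Sum>i=0..n. f_fps $ i * f_fps $ (n - i)) = f_fps $ 0 * f_fps $ n + (\<Sum>i=1..m. f_fps $ i * f_fps $ (n - i)) + f_fps $ n * f_fps $ 0"
      by (simp add: n sum.atLeast_Suc_atMost)
    then show ?thesis using f_fps_nth_0 by (simp add: n)
  qed
  ultimately show ?thesis by (simp add: algebra_simps)
qed

lemma f_fps_odd_coeff: "odd n \<Longrightarrow> f_fps $ n = 0"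
proof (induction n rule: less_induct)
  case (less n)
  have "n \<noteq> 2" "1 \<le> n" using \<open>odd n\<close> odd_pos[of n] by auto
  moreover have "(\<Sum>i=1..n-1. f_fps $ i * f_fps $ (n - i)) = 0"
  proof (rule sum.neutral, rule ballI)
    fix i assume i: "i \<in> {1..n-1}"
    show "f_fps $ i * f_fps $ (n - i) = 0"
    proof (cases "odd i")
      case True
      then show ?thesis using i less.IH[of i] odd_pos[OF \<open>odd n\<close>] by auto
    next
      case False
      then have "odd (n - i)" using \<open>odd n\<close> i by auto
      then show ?thesis using i less.IH[of "n - i"] by simp
    qed
  qed
  ultimately have "of_nat (n + 1) * f_fps $ n = 0"
    using f_fps_coeff_rec by simp
  then show ?case by simp
qed

text \<open>Every term of the convolution in the recursion for \<open>f\<^sub>2\<^sub>d\<close> has the sign \<open>(-1)\<^sup>d\<close>.\<close>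

lemma f_fps_even_coeff_sign: "1 \<le> d \<Longrightarrow> (-1)^(d + 1) * f_fps $ (2 * d) > 0"
proof (induction d rule: less_induct)
  case (less d)
  define c where "c a = (-1) ^ (a + 1) * f_fps $ (2 * a)" for a
  have conv: "(\<Sum>i=1..2*d-1. f_fps $ i * f_fps $ (2 * d - i)) = (\<Sum>a=1..d-1. f_fps $ (2 * a) * f_fps $ (2 * (d - a)))"
  proof -
    have "(2 * d - 1) div 2 = d - 1" by presburger
    then show ?thesis
      using sum_even_indices[of "\<lambda>i. f_fps $ i * f_fps $ (2 * d - i)" 1 "2 * d - 1"] less.prems
      by (simp add: f_fps_odd_coeff right_diff_distrib')
  qed
  show ?case
  proof (cases "d = 1")
    case True
    then show ?thesis using f_fps_coeff_rec[of 2] f_fps_odd_coeff[of 1] by simp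
  next
    case False
    have term_sign: "(-1)^d * (f_fps $ (2 * a) * f_fps $ (2 * (d - a))) = c a * c (d - a)"
      if "a \<in> {1..d-1}" for a
    proof -
      have "a + 1 + (d - a + 1) = d + 2" using that by auto
      then have "(-1::rat)^d = (-1) ^ (a + 1) * (-1) ^ (d - a + 1)"
        by (metis power_add power_minus1_even mult_1_right even_add even_two_times_div_two
            dvd_refl)
      then show ?thesis by (simp add: c_def)
    qed
    have pos: "0 < c a" if "1 \<le> a" "a < d" for a
      using less.IH[of a] that unfolding c_def by auto
    have "0 < (\<Sum>a=1..d-1. c a * c (d - a))"
      using False less.prems by (intro sum_pos mult_pos_pos pos) auto
    also have "\<dots> = (-1)^d * (\<Sum>a=1..d-1. f_fps $ (2 * a) * f_fps $ (2 * (d - a)))"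
      using term_sign by (simp add: sum_distrib_left)
    also have "\<dots> = - ((-1)^d * (of_nat (2 * d + 1) * f_fps $ (2 * d)))"
      using f_fps_coeff_rec[of "2 * d"] False less.prems by (simp only: conv) simp
    finally show ?thesis
      by (simp add: zero_less_mult_iff mult_less_0_iff)
  qed
qed

lemma f_fps_even_coeff_nonzero: "1 \<le> d \<Longrightarrow> f_fps $ (2 * d) \<noteq> 0"
  using f_fps_even_coeff_sign[of d] by auto

text \<open>The logarithmic Euler derivative \<open>t f' / f\<close>, in the closed form given by the Riccati
  equation and the doubling formula.\<close>

definition f_log_euler :: "rat fps" where
  "f_log_euler = 1 + fps_dilate 2 f_fps - 2 * f_fps"

lemma fps_euler_f_fps: "fps_euler f_fps = f_fps * f_log_euler"
  using f_fps_doubling f_fps_riccati unfolding f_log_euler_def by algebra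

lemma f_log_euler_nth:
  "f_log_euler $ n = (if n = 0 then 1 else 0) + 2 ^ n * f_fps $ n - 2 * f_fps $ n"
  by (simp add: f_log_euler_def numeral_fps_const)

lemma f_log_euler_nth_0: "f_log_euler $ 0 = 0"
  by (simp add: f_log_euler_nth f_fps_nth_0)

lemma f_log_euler_odd_coeff: "odd n \<Longrightarrow> f_log_euler $ n = 0"
  using odd_pos[of n] by (auto simp: f_log_euler_nth f_fps_odd_coeff)

lemma f_log_euler_even_coeff_nonzero:
  assumes "1 \<le> d" shows "f_log_euler $ (2 * d) \<noteq> 0"
proof -
  have "(2::rat) ^ 2 \<le> 2 ^ (2 * d)"
    by (rule power_increasing) (use assms in auto)
  then show ?thesis
    using assms f_fps_even_coeff_nonzero[OF assms] by (simp add: f_log_euler_nth algebra_simps)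
qed

section \<open>Newton-type identities\<close>

text \<open>\<open>F(a t)\<close> for a polynomial variable \<open>a\<close>.\<close>

definition fps_var_dilate :: "'v \<Rightarrow> rat fps \<Rightarrow> 'v mpoly fps" where
  "fps_var_dilate a F = Abs_fps (\<lambda>d. Poly_Mapping.single (Poly_Mapping.single a d) (F $ d))"

lemma fps_var_dilate_nth [simp]:
  "fps_var_dilate a F $ d = Poly_Mapping.single (Poly_Mapping.single a d) (F $ d)"
  by (simp add: fps_var_dilate_def)

lemma f_subst_eq: "f_subst v = fps_var_dilate v f_fps"
  by (simp add: f_subst_def fps_var_dilate_def)

lemma single_sum: "Poly_Mapping.single k (sum f B) = (\<Sum>x\<in>B. Poly_Mapping.single k (f x))"
  by (induction B rule: infinite_finite_induct) (simp_all add: single_add)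

lemma fps_var_dilate_mult: "fps_var_dilate a (F * G) = fps_var_dilate a F * fps_var_dilate a G"
proof (rule fps_ext)
  fix n
  have "(fps_var_dilate a F * fps_var_dilate a G) $ n =
      (\<Sum>i=0..n. Poly_Mapping.single (Poly_Mapping.single a n) (F $ i * G $ (n - i)))"
    unfolding fps_mult_nth
  proof (rule sum.cong[OF refl])
    fix i assume "i \<in> {0..n}"
    then have "Poly_Mapping.single a i + Poly_Mapping.single a (n - i) = Poly_Mapping.single a n"
      by (simp flip: single_add)
    then show "fps_var_dilate a F $ i * fps_var_dilate a G $ (n - i) =
        Poly_Mapping.single (Poly_Mapping.single a n) (F $ i * G $ (n - i))"
      by (simp add: mult_single)
  qed
  also have "\<dots> = fps_var_dilate a (F * G) $ n"
    by (simp add: fps_mult_nth single_sum)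
  finally show "fps_var_dilate a (F * G) $ n = (fps_var_dilate a F * fps_var_dilate a G) $ n" ..
qed

lemma of_nat_mult_single:
  "of_nat k * Poly_Mapping.single (m :: 'v \<Rightarrow>\<^sub>0 nat) (c::rat) = Poly_Mapping.single m (of_nat k * c)"
proof -
  have "(of_nat k :: 'v mpoly) = Poly_Mapping.single 0 (of_nat k)" by simp
  then show ?thesis by (simp only: mult_single add_0_left)
qed

lemma fps_var_dilate_euler: "fps_var_dilate a (fps_euler F) = fps_euler (fps_var_dilate a F)"
  by (rule fps_ext) (simp add: of_nat_mult_single)

lemma prod_fps_var_dilate_nth_0:
  assumes "F $ 0 = 1"
  shows "(\<Prod>j\<in>J. fps_var_dilate (av j) F) $ 0 = 1"
  by (induction J rule: infinite_finite_induct) (simp_all add: assms)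

definition power_sum :: "(nat \<Rightarrow> 'v) \<Rightarrow> nat \<Rightarrow> nat \<Rightarrow> 'v mpoly" where
  "power_sum av n d = (\<Sum>j\<in>{1..n}. Poly_Mapping.single (Poly_Mapping.single (av j) d) 1)"

text \<open>If \<open>t \<phi>' = \<phi> \<nu>\<close>, then \<open>G = \<Prod>\<^sub>j \<phi>(a\<^sub>j t)\<close> satisfies \<open>t G' = G \<Sum>\<^sub>j \<nu>(a\<^sub>j t)\<close>; comparing
  coefficients expresses \<open>m G\<^sub>m\<close> through the power sums \<open>p\<^sub>d = \<Sum>\<^sub>j a\<^sub>j\<^sup>d\<close>.\<close>

lemma prod_var_dilate_euler_coeff:
  fixes av :: "nat \<Rightarrow> 'v" and n :: nat
  assumes "fps_euler \<phi> = \<phi> * \<nu>"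
  defines "G \<equiv> \<Prod>j\<in>{1..n}. fps_var_dilate (av j) \<phi>"
  shows "of_nat m * G $ m = (\<Sum>d=0..m. mconst (\<nu> $ d) * power_sum av n d * G $ (m - d))"
proof -
  have "fps_euler G = G * (\<Sum>j\<in>{1..n}. fps_var_dilate (av j) \<nu>)"
    unfolding G_def
    by (rule fps_euler_prod) (simp_all flip: fps_var_dilate_euler fps_var_dilate_mult add: assms)
  moreover have "(\<Sum>j\<in>{1..n}. fps_var_dilate (av j) \<nu>) $ d = mconst (\<nu> $ d) * power_sum av n d" for d
    by (simp add: fps_sum_nth power_sum_def sum_distrib_left mconst_mult_single)
  ultimately have "fps_euler G $ m = (\<Sum>d=0..m. mconst (\<nu> $ d) * power_sum av n d * G $ (m - d))"
    by (simp add: fps_mult_nth mult.commute[of G])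
  then show ?thesis by simp
qed

lemma prod_var_dilate_euler_coeff_even:
  fixes av :: "nat \<Rightarrow> 'v" and n :: nat
  assumes "fps_euler \<phi> = \<phi> * \<nu>" "\<phi> $ 0 = 1" "\<nu> $ 0 = 0" "\<And>d. odd d \<Longrightarrow> \<nu> $ d = 0"
  defines "G \<equiv> \<Prod>j\<in>{1..n}. fps_var_dilate (av j) \<phi>"
  shows "of_nat (2 * r) * G $ (2 * r) =
    mconst (\<nu> $ (2 * r)) * power_sum av n (2 * r) +
    (\<Sum>s=1..r-1. mconst (\<nu> $ (2 * s)) * power_sum av n (2 * s) * G $ (2 * (r - s)))"
proof (cases "r = 0")
  case False
  have "of_nat (2 * r) * G $ (2 * r) =
      (\<Sum>s=0..r. mconst (\<nu> $ (2 * s)) * power_sum av n (2 * s) * G $ (2 * r - 2 * s))"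
    using prod_var_dilate_euler_coeff[OF assms(1), where av = av and n = n and m = "2 * r"]
      sum_even_indices[of "\<lambda>d. mconst (\<nu> $ d) * power_sum av n d * G $ (2 * r - d)" 0 "2 * r"]
    by (simp add: assms(4) G_def)
  also have "\<dots> = (\<Sum>s=1..r. mconst (\<nu> $ (2 * s)) * power_sum av n (2 * s) * G $ (2 * (r - s)))"
    by (simp add: sum.atLeast_Suc_atMost assms(3) right_diff_distrib')
  also have "\<dots> = mconst (\<nu> $ (2 * r)) * power_sum av n (2 * r) +
      (\<Sum>s=1..r-1. mconst (\<nu> $ (2 * s)) * power_sum av n (2 * s) * G $ (2 * (r - s)))"
    using False prod_fps_var_dilate_nth_0[OF assms(2), where J = "{1..n}" and av = av]
    by (cases r) (simp_all add: G_def)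
  finally show ?thesis .
qed (simp add: assms(3))

definition log_euler_1_X2 :: "rat fps" where
  "log_euler_1_X2 = Abs_fps (\<lambda>n. if 2 \<le> n \<and> even n then 2 * (-1) ^ (n div 2 - 1) else 0)"

lemma log_euler_1_X2_nth:
  "log_euler_1_X2 $ n = (if 2 \<le> n \<and> even n then 2 * (-1) ^ (n div 2 - 1) else 0)"
  by (simp add: log_euler_1_X2_def)

lemma fps_euler_1_X2: "fps_euler (1 + fps_X^2) = (1 + fps_X^2) * log_euler_1_X2"
proof (rule fps_ext)
  fix n :: nat
  have rhs: "((1 + fps_X^2) * log_euler_1_X2) $ m =
      log_euler_1_X2 $ m + (if m < 2 then 0 else log_euler_1_X2 $ (m - 2))" for m
    by (simp add: distrib_right fps_X_power_mult_nth)
  consider "n < 2" | "n = 2" | "odd n" | d where "n = 2 * d" "2 \<le> d"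
  proof (cases "even n")
    case True
    then obtain d where "n = 2 * d" by (auto elim: evenE)
    moreover assume "n < 2 \<Longrightarrow> thesis" "n = 2 \<Longrightarrow> thesis"
      "\<And>d. n = 2 * d \<Longrightarrow> 2 \<le> d \<Longrightarrow> thesis"
    ultimately show thesis by (cases "d \<le> 1") (auto simp: le_Suc_eq)
  qed
  then show "fps_euler (1 + fps_X^2) $ n = ((1 + fps_X^2) * log_euler_1_X2) $ n"
  proof cases
    case 4
    then have "d - 1 = Suc (d - 2)" "n - 2 = 2 * (d - 1)" by simp_all
    then have "(-1::rat) ^ (d - 1) = - ((-1) ^ (d - 2))" "n - 2 = 2 * (d - 1)" by simp_all
    moreover have "d - Suc (Suc 0) = d - 2" "Suc 0 \<le> d - Suc 0" using 4 by simp_all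
    ultimately show ?thesis using 4 unfolding rhs by (simp add: log_euler_1_X2_nth)
  qed (auto simp: rhs log_euler_1_X2_nth)
qed

text \<open>\<open>esym_sq av n i\<close> is the \<open>i\<close>-th elementary symmetric polynomial in \<open>a\<^sub>1\<^sup>2, \<dots>, a\<^sub>n\<^sup>2\<close>.\<close>

definition esym_sq :: "(nat \<Rightarrow> 'v) \<Rightarrow> nat \<Rightarrow> nat \<Rightarrow> 'v mpoly" where
  "esym_sq av n i = (\<Prod>j\<in>{1..n}. fps_var_dilate (av j) (1 + fps_X^2)) $ (2 * i)"

definition esq_subalg :: "(nat \<Rightarrow> 'v) \<Rightarrow> nat \<Rightarrow> nat \<Rightarrow> 'v mpoly set" where
  "esq_subalg av n j = {meval (esym_sq av n) R | R. mvars R \<subseteq> {1..j}}"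

lemma mconst_in_esq_subalg: "mconst c \<in> esq_subalg av n j"
  unfolding esq_subalg_def by (rule CollectI, rule exI[of _ "mconst c"]) simp

lemma esym_sq_in_esq_subalg: "1 \<le> r \<Longrightarrow> r \<le> j \<Longrightarrow> esym_sq av n r \<in> esq_subalg av n j"
  unfolding esq_subalg_def by (rule CollectI, rule exI[of _ "mvar r"]) simp

lemma add_in_esq_subalg:
  assumes "P \<in> esq_subalg av n j" "Q \<in> esq_subalg av n j"
  shows "P + Q \<in> esq_subalg av n j"
proof -
  obtain R S where "mvars R \<subseteq> {1..j}" "P = meval (esym_sq av n) R"
    "mvars S \<subseteq> {1..j}" "Q = meval (esym_sq av n) S"
    using assms unfolding esq_subalg_def by blast
  then show ?thesis
    unfolding esq_subalg_def using mvars_add[of R S]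
    by (auto intro!: exI[of _ "R + S"] simp: meval_add)
qed

lemma mult_in_esq_subalg:
  assumes "P \<in> esq_subalg av n j" "Q \<in> esq_subalg av n j"
  shows "P * Q \<in> esq_subalg av n j"
proof -
  obtain R S where "mvars R \<subseteq> {1..j}" "P = meval (esym_sq av n) R"
    "mvars S \<subseteq> {1..j}" "Q = meval (esym_sq av n) S"
    using assms unfolding esq_subalg_def by blast
  then show ?thesis
    unfolding esq_subalg_def using mvars_mult[of R S]
    by (auto intro!: exI[of _ "R * S"] simp: meval_mult)
qed

lemma sum_in_esq_subalg:
  "(\<And>x. x \<in> B \<Longrightarrow> g x \<in> esq_subalg av n j) \<Longrightarrow> sum g B \<in> esq_subalg av n j"
  by (induction B rule: infinite_finite_induct)
     (auto intro: add_in_esq_subalg mconst_in_esq_subalg[where c = 0, simplified])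

lemma esq_subalg_mono: "j \<le> j' \<Longrightarrow> esq_subalg av n j \<subseteq> esq_subalg av n j'"
  unfolding esq_subalg_def by fastforce

lemma in_esq_subalg_if_triangular:
  assumes "Q - mconst c * esym_sq av n r \<in> esq_subalg av n (r - 1)" "1 \<le> r" "r \<le> j"
  shows "Q \<in> esq_subalg av n j"
proof -
  have "Q - mconst c * esym_sq av n r \<in> esq_subalg av n j"
    using assms(1) esq_subalg_mono[of "r - 1" j av n] assms(3) by (meson diff_le_self le_trans subsetD)
  moreover have "mconst c * esym_sq av n r \<in> esq_subalg av n j"
    using assms(2,3) by (intro mult_in_esq_subalg mconst_in_esq_subalg esym_sq_in_esq_subalg)
  ultimately show ?thesis
    using add_in_esq_subalg by fastforce
qed

lemma mconst_mult_eq_iff: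
  "a \<noteq> 0 \<Longrightarrow> mconst a * P = Q \<longleftrightarrow> P = mconst (inverse a) * Q"
  by (auto simp: mult.assoc[symmetric] simp flip: mconst_mult)

lemma mconst_uminus: "mconst (- a) = - mconst a"
  by (simp add: mconst_def single_uminus)

lemma minus_one_power_square: "(-1::rat) ^ k * (-1) ^ k = 1"
  by (simp flip: power_mult_distrib)

lemma mconst_mult_solve:
  assumes "a \<noteq> 0" "mconst a * P = mconst b * Q + R"
  shows "P - mconst (b / a) * Q = mconst (inverse a) * R"
proof -
  have "P = mconst (inverse a) * (mconst b * Q + R)"
    using assms by (subst (asm) mconst_mult_eq_iff) simp_all
  also have "\<dots> = mconst (inverse a * b) * Q + mconst (inverse a) * R"
    by (simp add: distrib_left mult.assoc mconst_mult)
  finally show ?thesis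
    by (simp add: divide_inverse mult.commute)
qed

lemma power_sum_esym_sq:
  assumes "1 \<le> r"
  shows "power_sum av n (2 * r) - mconst ((-1) ^ (r - 1) * of_nat r) * esym_sq av n r
    \<in> esq_subalg av n (r - 1)"
  using assms
proof (induction r rule: less_induct)
  case (less r)
  define u :: rat where "u = (-1) ^ (r - 1)"
  define Rest where "Rest = (\<Sum>s=1..r-1.
    mconst (log_euler_1_X2 $ (2 * s)) * power_sum av n (2 * s) * esym_sq av n (r - s))"
  have "of_nat (2 * r) * esym_sq av n r = mconst (2 * u) * power_sum av n (2 * r) + Rest"
    using prod_var_dilate_euler_coeff_even[OF fps_euler_1_X2, where av = av and n = n and r = r]
      less.prems
    by (simp add: esym_sq_def Rest_def log_euler_1_X2_nth u_def)
  then have "mconst (2 * u) * power_sum av n (2 * r) =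
      mconst (of_nat (2 * r)) * esym_sq av n r + mconst (- 1) * Rest"
    by (simp only: mconst_of_nat mconst_uminus) (simp add: algebra_simps)
  moreover have "u \<noteq> 0"
    by (simp add: u_def)
  ultimately have "power_sum av n (2 * r) - mconst (of_nat (2 * r) / (2 * u)) * esym_sq av n r =
      mconst (inverse (2 * u)) * (mconst (- 1) * Rest)"
    by (intro mconst_mult_solve) simp_all
  moreover have "of_nat (2 * r) / (2 * u) = u * of_nat r"
    using minus_one_power_square[of "r - 1"] by (simp add: u_def field_simps)
  moreover have "Rest \<in> esq_subalg av n (r - 1)"
    unfolding Rest_def
  proof (intro sum_in_esq_subalg mult_in_esq_subalg mconst_in_esq_subalg)
    fix s assume s: "s \<in> {1..r-1}"
    show "power_sum av n (2 * s) \<in> esq_subalg av n (r - 1)"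
      using s by (intro in_esq_subalg_if_triangular[OF less.IH[of s]]) auto
    show "esym_sq av n (r - s) \<in> esq_subalg av n (r - 1)"
      using s by (intro esym_sq_in_esq_subalg) auto
  qed
  ultimately show ?case
    by (simp only: u_def mult_in_esq_subalg mconst_in_esq_subalg)
qed

lemma prod_var_dilate_coeff_esym_sq:
  fixes av :: "nat \<Rightarrow> 'v" and n :: nat
  assumes euler: "fps_euler \<phi> = \<phi> * \<nu>"
    and "\<phi> $ 0 = 1" "\<nu> $ 0 = 0" "\<And>d. odd d \<Longrightarrow> \<nu> $ d = 0" and "1 \<le> r"
  defines "G \<equiv> \<Prod>j\<in>{1..n}. fps_var_dilate (av j) \<phi>"
  shows "G $ (2 * r) - mconst (\<nu> $ (2 * r) * (-1) ^ (r - 1) / 2) * esym_sq av n r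
    \<in> esq_subalg av n (r - 1)"
  using \<open>1 \<le> r\<close>
proof (induction r rule: less_induct)
  case (less r)
  define u :: rat where "u = (-1) ^ (r - 1)"
  define w where "w = \<nu> $ (2 * r)"
  define Rest where "Rest = (\<Sum>s=1..r-1. mconst (\<nu> $ (2 * s)) * power_sum av n (2 * s) * G $ (2 * (r - s)))"
  define Z where "Z = power_sum av n (2 * r) - mconst (u * of_nat r) * esym_sq av n r"
  have "of_nat (2 * r) * G $ (2 * r) = mconst w * power_sum av n (2 * r) + Rest"
    unfolding G_def Rest_def w_def using assms(1-4) by (rule prod_var_dilate_euler_coeff_even)
  then have "mconst (of_nat (2 * r)) * G $ (2 * r) =
      mconst (w * (u * of_nat r)) * esym_sq av n r + (mconst w * Z + Rest)"
    by (simp only: mconst_of_nat) (simp add: Z_def mconst_of_nat mconst_mult algebra_simps)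
  then have "G $ (2 * r) - mconst (w * (u * of_nat r) / of_nat (2 * r)) * esym_sq av n r =
      mconst (inverse (of_nat (2 * r))) * (mconst w * Z + Rest)"
    using less.prems by (intro mconst_mult_solve) simp_all
  moreover have "w * (u * of_nat r) / of_nat (2 * r) = w * u / 2"
    using less.prems by simp
  ultimately have eq: "G $ (2 * r) - mconst (w * u / 2) * esym_sq av n r =
      mconst (inverse (of_nat (2 * r))) * (mconst w * Z + Rest)"
    by (simp only:)
  have "Z \<in> esq_subalg av n (r - 1)"
    unfolding Z_def u_def using less.prems by (rule power_sum_esym_sq)
  moreover have "Rest \<in> esq_subalg av n (r - 1)"
    unfolding Rest_def
  proof (intro sum_in_esq_subalg mult_in_esq_subalg mconst_in_esq_subalg)
    fix s assume s: "s \<in> {1..r-1}"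
    show "power_sum av n (2 * s) \<in> esq_subalg av n (r - 1)"
      using s by (intro in_esq_subalg_if_triangular[OF power_sum_esym_sq]) auto
    show "G $ (2 * (r - s)) \<in> esq_subalg av n (r - 1)"
      using s by (intro in_esq_subalg_if_triangular[OF less.IH[of "r - s"]]) auto
  qed
  ultimately have "mconst (inverse (of_nat (2 * r))) * (mconst w * Z + Rest) \<in> esq_subalg av n (r - 1)"
    by (intro mult_in_esq_subalg add_in_esq_subalg mconst_in_esq_subalg)
  then show ?case
    using eq by (simp only: u_def w_def)
qed

text \<open>The coefficient of \<open>e\<^sub>r\<close> in \<open>\<ell>\<^sub>r\<close> modulo \<open>\<rat>[e\<^sub>1, \<dots>, e\<^sub>r\<^sub>-\<^sub>1]\<close>.\<close>

definition ell_coeff :: "nat \<Rightarrow> rat" where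
  "ell_coeff r = f_log_euler $ (2 * r) * (-1) ^ (r - 1) / 2"

lemma ell_coeff_nonzero: "1 \<le> r \<Longrightarrow> ell_coeff r \<noteq> 0"
  using f_log_euler_even_coeff_nonzero[of r] by (simp add: ell_coeff_def)

lemma ell_esym_sq:
  "1 \<le> r \<Longrightarrow> ell av n r - mconst (ell_coeff r) * esym_sq av n r \<in> esq_subalg av n (r - 1)"
  unfolding ell_def f_subst_eq ell_coeff_def
  by (rule prod_var_dilate_coeff_esym_sq[OF fps_euler_f_fps f_fps_nth_0 f_log_euler_nth_0
        f_log_euler_odd_coeff])

lemma less_poly_mapping_iff:
  "(a :: 'a::linorder \<Rightarrow>\<^sub>0 nat) < b \<longleftrightarrow> less_fun (Poly_Mapping.lookup a) (Poly_Mapping.lookup b)"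
  by transfer simp

lemma less_single_if_keys_greater:
  assumes "\<And>v'. v' \<in> Poly_Mapping.keys m \<Longrightarrow> v < v'" "0 < c"
  shows "m < Poly_Mapping.single (v :: 'a::linorder) (c :: nat)"
proof -
  have zero: "Poly_Mapping.lookup m v' = 0" if "v' \<le> v" for v'
    using assms(1)[of v'] that by (metis in_keys_iff leD)
  show ?thesis
    unfolding less_poly_mapping_iff less_fun_def
    using assms(2) zero by (intro exI[of _ v]) (auto simp: lookup_single)
qed

lemma single_less_single:
  "(a :: 'a::linorder) < b \<Longrightarrow> 0 < c \<Longrightarrow> Poly_Mapping.single b c < Poly_Mapping.single a (c :: nat)"
  by (rule less_single_if_keys_greater) auto

definition sigma_mon :: "(nat \<Rightarrow> 'v) \<Rightarrow> nat \<Rightarrow> ('v \<Rightarrow>\<^sub>0 nat)" where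
  "sigma_mon av n = (\<Sum>j\<in>{1..n}. Poly_Mapping.single (av j) 1)"

lemma sigma_top_eq: "sigma_top av n = Poly_Mapping.single (sigma_mon av n) 1"
proof -
  have "(\<Prod>j\<in>J. Poly_Mapping.single (m j) (1::rat)) = Poly_Mapping.single (\<Sum>j\<in>J. m j) 1" for J m
    by (induction J rule: infinite_finite_induct) (simp_all add: mult_single)
  then show ?thesis
    by (simp add: sigma_top_def mvar_def sigma_mon_def)
qed

lemma lookup_sigma_mon:
  "inj av \<Longrightarrow> Poly_Mapping.lookup (sigma_mon av n) (av j) = (if 1 \<le> j \<and> j \<le> n then 1 else 0)"
  by (auto simp: sigma_mon_def lookup_sum lookup_single when_def inj_eq intro: sum.neutral)

lemma lookup_sigma_mon_notin: "v \<notin> range av \<Longrightarrow> Poly_Mapping.lookup (sigma_mon av n) v = 0"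
  by (auto simp: sigma_mon_def lookup_sum lookup_single when_def intro!: sum.neutral)

definition esq_lead_mon :: "(nat \<Rightarrow> 'v) \<Rightarrow> nat \<Rightarrow> ('v \<Rightarrow>\<^sub>0 nat)" where
  "esq_lead_mon av i = (\<Sum>j\<in>{1..i}. Poly_Mapping.single (av j) 2)"

lemma lookup_esq_lead_mon:
  "inj av \<Longrightarrow> Poly_Mapping.lookup (esq_lead_mon av i) (av j) = (if 1 \<le> j \<and> j \<le> i then 2 else 0)"
  by (auto simp: esq_lead_mon_def lookup_sum lookup_single when_def inj_eq intro: sum.neutral)

lemma lookup_esq_lead_mon_notin: "v \<notin> range av \<Longrightarrow> Poly_Mapping.lookup (esq_lead_mon av i) v = 0"
  by (auto simp: esq_lead_mon_def lookup_sum lookup_single when_def intro!: sum.neutral)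

lemma mvar_square: "mvar a ^ 2 = Poly_Mapping.single (Poly_Mapping.single a 2) 1"
proof -
  have "Poly_Mapping.single a 1 + Poly_Mapping.single a 1 = Poly_Mapping.single a (2::nat)"
    by (metis one_add_one single_add)
  then show ?thesis by (simp add: mvar_def power2_eq_square mult_single)
qed

lemma esym_sq_Suc:
  assumes "1 \<le> i"
  shows "esym_sq av (Suc n) i = esym_sq av n i + mvar (av (Suc n)) ^ 2 * esym_sq av n (i - 1)"
proof -
  let ?H = "\<Prod>j\<in>{1..n}. fps_var_dilate (av j) (1 + fps_X^2)"
  have dilate: "fps_var_dilate a (1 + fps_X^2) = 1 + fps_const (mvar a ^ 2) * fps_X^2" for a
    by (rule fps_ext) (auto simp: mvar_square)
  have "{1..Suc n} = insert (Suc n) {1..n}" by auto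
  then have "esym_sq av (Suc n) i = ((1 + fps_const (mvar (av (Suc n)) ^ 2) * fps_X^2) * ?H) $ (2 * i)"
    by (simp add: esym_sq_def dilate)
  also have "\<dots> = esym_sq av n i + mvar (av (Suc n)) ^ 2 * esym_sq av n (i - 1)"
    using assms by (simp add: distrib_right mult.assoc fps_X_power_mult_nth esym_sq_def right_diff_distrib')
  finally show ?thesis .
qed

lemma esym_sq_0 [simp]: "esym_sq av n 0 = 1"
  by (simp add: esym_sq_def prod_fps_var_dilate_nth_0)

lemma esym_sq_eq_0: "n < i \<Longrightarrow> esym_sq av n i = 0"
proof (induction n arbitrary: i)
  case 0
  then show ?case by (simp add: esym_sq_def)
next
  case (Suc n)
  then show ?case by (simp add: esym_sq_Suc)
qed

lemma esq_lead_mon_Suc: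
  "esq_lead_mon av (Suc i) = esq_lead_mon av i + Poly_Mapping.single (av (Suc i)) 2"
  by (simp add: esq_lead_mon_def)

lemma lead_mon_mvar_square_mult:
  fixes P :: "'v::linorder mpoly"
  assumes "P \<noteq> 0"
  shows "mvar a ^ 2 * P \<noteq> 0 \<and> lead_mon (mvar a ^ 2 * P) = lead_mon P + Poly_Mapping.single a 2"
  using assms lead_mon_mult[of "mvar a ^ 2" P] by (simp add: mvar_square lead_mon_single add.commute)

lemma lead_mon_esym_sq:
  fixes av :: "nat \<Rightarrow> 'v::linorder"
  assumes "strict_mono av" "i \<le> n"
  shows "esym_sq av n i \<noteq> 0 \<and> lead_mon (esym_sq av n i) = esq_lead_mon av i"
  using assms(2)
proof (induction n arbitrary: i)
  case 0
  then show ?case by (simp add: lead_mon_1 esq_lead_mon_def)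
next
  case (Suc n)
  show ?case
  proof (cases i)
    case (Suc m)
    let ?low = "mvar (av (Suc n)) ^ 2 * esym_sq av n m"
    have low: "?low \<noteq> 0" "lead_mon ?low = esq_lead_mon av m + Poly_Mapping.single (av (Suc n)) 2"
      using Suc.IH[of m] Suc.prems \<open>i = Suc m\<close>
        lead_mon_mvar_square_mult[of "esym_sq av n m" "av (Suc n)"] by simp_all
    show ?thesis
    proof (cases "i \<le> n")
      case True
      then have "av (Suc m) < av (Suc n)"
        using \<open>i = Suc m\<close> assms(1) by (simp add: strict_mono_less)
      then have "lead_mon ?low < lead_mon (esym_sq av n i)"
        using low Suc.IH[OF True] \<open>i = Suc m\<close> by (simp add: esq_lead_mon_Suc single_less_single)
      then have "m' < lead_mon (esym_sq av n i)" if "m' \<in> Poly_Mapping.keys ?low" for m'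
        using le_lead_mon[OF that] by order
      then show ?thesis
        using lead_mon_add_lower[of "esym_sq av n i" ?low] Suc.IH[OF True] \<open>i = Suc m\<close>
        by (simp add: esym_sq_Suc)
    next
      case False
      then have "m = n" using Suc.prems \<open>i = Suc m\<close> by simp
      then show ?thesis
        using low esym_sq_eq_0[of n i av] \<open>i = Suc m\<close> by (simp add: esym_sq_Suc esq_lead_mon_Suc)
    qed
  qed (simp add: lead_mon_1 esq_lead_mon_def)
qed

text \<open>Variables \<open>X r\<close> with smaller \<open>r\<close> come later, so that a polynomial in
  \<open>X 1, \<dots>, X (r - 1)\<close> is lexicographically below the monomial \<open>X r\<close>.\<close>

instantiation svar :: linorder
begin

fun less_eq_svar :: "svar \<Rightarrow> svar \<Rightarrow> bool" where
  "less_eq_svar E _ = True"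
| "less_eq_svar (X i) E = False"
| "less_eq_svar (X i) (X j) = (j \<le> i)"

definition less_svar :: "svar \<Rightarrow> svar \<Rightarrow> bool" where
  "less_svar a b = (a \<le> b \<and> \<not> b \<le> a)"

instance
proof
  fix x y z :: svar
  show "(x < y) = (x \<le> y \<and> \<not> y \<le> x)" by (simp add: less_svar_def)
  show "x \<le> x" by (cases x) auto
  show "x \<le> y \<Longrightarrow> y \<le> z \<Longrightarrow> x \<le> z" by (cases x; cases y; cases z) auto
  show "x \<le> y \<Longrightarrow> y \<le> x \<Longrightarrow> x = y" by (cases x; cases y) auto
  show "x \<le> y \<or> y \<le> x" by (cases x; cases y) auto
qed

end

instantiation tvar :: linorder
begin

fun less_eq_tvar :: "tvar \<Rightarrow> tvar \<Rightarrow> bool" where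
  "less_eq_tvar (A i) (A j) = (i \<le> j)"
| "less_eq_tvar (A i) (Y j) = True"
| "less_eq_tvar (Y i) (A j) = False"
| "less_eq_tvar (Y i) (Y j) = (i \<le> j)"

definition less_tvar :: "tvar \<Rightarrow> tvar \<Rightarrow> bool" where
  "less_tvar a b = (a \<le> b \<and> \<not> b \<le> a)"

instance
proof
  fix x y z :: tvar
  show "(x < y) = (x \<le> y \<and> \<not> y \<le> x)" by (simp add: less_tvar_def)
  show "x \<le> x" by (cases x) auto
  show "x \<le> y \<Longrightarrow> y \<le> z \<Longrightarrow> x \<le> z" by (cases x; cases y; cases z) auto
  show "x \<le> y \<Longrightarrow> y \<le> x \<Longrightarrow> x = y" by (cases x; cases y) auto
  show "x \<le> y \<or> y \<le> x" by (cases x; cases y) auto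
qed

end

lemma strict_mono_A: "strict_mono A"
  by (rule strict_monoI) (simp add: less_tvar_def)

definition esq_family :: "(nat \<Rightarrow> 'v) \<Rightarrow> nat \<Rightarrow> nat \<Rightarrow> (nat \<Rightarrow> 'v) \<Rightarrow> svar \<Rightarrow> 'v mpoly" where
  "esq_family av n K yv v =
    (case v of E \<Rightarrow> sigma_top av n | X r \<Rightarrow> if r < K then esym_sq av n r else mvar (yv r))"

definition ell_family :: "(nat \<Rightarrow> 'v) \<Rightarrow> nat \<Rightarrow> nat \<Rightarrow> (nat \<Rightarrow> 'v) \<Rightarrow> svar \<Rightarrow> 'v mpoly" where
  "ell_family av n K yv v =
    (case v of E \<Rightarrow> sigma_top av n | X r \<Rightarrow> if r < K then ell av n r else mvar (yv r))"

locale sigma_family =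
  fixes av :: "nat \<Rightarrow> 'v::linorder" and n K :: nat and yv :: "nat \<Rightarrow> 'v" and I :: "svar set"
  assumes strict_mono_av: "strict_mono av"
    and K_le_n: "K \<le> n" and n_pos: "1 \<le> n"
    and vars_I: "I \<subseteq> {E} \<union> {X r | r. 1 \<le> r}"
    and fresh_yv: "\<And>r. X r \<in> I \<Longrightarrow> K \<le> r \<Longrightarrow> yv r \<notin> range av"
    and inj_yv: "inj_on yv {r. X r \<in> I \<and> K \<le> r}"
begin

lemma inj_av: "inj av"
  using strict_mono_av by (rule strict_mono_imp_inj_on)

lemma yv_neq_av: "X r \<in> I \<Longrightarrow> K \<le> r \<Longrightarrow> yv r \<noteq> av j"
  using fresh_yv by blast

lemma lookup_lead_mon_esq_family_av:
  assumes "i \<in> I"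
  shows "Poly_Mapping.lookup (lead_mon (esq_family av n K yv i)) (av j) =
    (case i of E \<Rightarrow> if 1 \<le> j \<and> j \<le> n then 1 else 0
     | X r \<Rightarrow> if r < K \<and> 1 \<le> j \<and> j \<le> r then 2 else 0)"
  using assms vars_I yv_neq_av K_le_n lead_mon_esym_sq[OF strict_mono_av]
  by (auto simp: esq_family_def sigma_top_eq lead_mon_single lookup_sigma_mon[OF inj_av]
      lead_mon_mvar lookup_esq_lead_mon[OF inj_av] lookup_single when_def split: svar.split)

lemma lookup_lead_mon_esq_family_fresh:
  assumes "i \<in> I" "v \<notin> range av"
  shows "Poly_Mapping.lookup (lead_mon (esq_family av n K yv i)) v =
    (case i of E \<Rightarrow> 0 | X r \<Rightarrow> if K \<le> r \<and> yv r = v then 1 else 0)"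
  using assms vars_I K_le_n lead_mon_esym_sq[OF strict_mono_av]
  by (auto simp: esq_family_def sigma_top_eq lead_mon_single lookup_sigma_mon_notin
      lead_mon_mvar lookup_esq_lead_mon_notin lookup_single when_def split: svar.split)

lemma esq_family_nonzero: "i \<in> I \<Longrightarrow> esq_family av n K yv i \<noteq> 0"
  using vars_I K_le_n lead_mon_esym_sq[OF strict_mono_av]
  by (auto simp: esq_family_def sigma_top_eq split: svar.split)

text \<open>Each member of the family is detected by the exponent difference of two variables
  in the leading monomials: \<open>a\<^sub>n - a\<^sub>n\<^sub>+\<^sub>1\<close> for \<open>\<sigma>\<^sub>n\<close>, \<open>a\<^sub>r - a\<^sub>r\<^sub>+\<^sub>1\<close> for \<open>e\<^sub>r\<close>, and
  \<open>yv r - a\<^sub>n\<^sub>+\<^sub>1\<close> for \<open>yv r\<close>.\<close>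

lemma lead_mon_separates_E:
  "i \<in> I \<Longrightarrow> Poly_Mapping.lookup (lead_mon (esq_family av n K yv i)) (av n) =
    Poly_Mapping.lookup (lead_mon (esq_family av n K yv i)) (av (Suc n)) + (if i = E then 1 else 0)"
  using K_le_n n_pos by (auto simp: lookup_lead_mon_esq_family_av split: svar.split)

lemma lead_mon_separates_esym_sq:
  assumes "i \<in> I" "1 \<le> r" "r < K"
  shows "Poly_Mapping.lookup (lead_mon (esq_family av n K yv i)) (av r) =
    Poly_Mapping.lookup (lead_mon (esq_family av n K yv i)) (av (Suc r)) + (if i = X r then 2 else 0)"
proof (cases i)
  case (X r')
  then show ?thesis
    using assms by (cases "r' = r") (auto simp: lookup_lead_mon_esq_family_av)
qed (use assms K_le_n in \<open>simp add: lookup_lead_mon_esq_family_av\<close>)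

lemma lead_mon_separates_fresh:
  assumes "i \<in> I" "X r \<in> I" "K \<le> r"
  shows "Poly_Mapping.lookup (lead_mon (esq_family av n K yv i)) (yv r) =
    Poly_Mapping.lookup (lead_mon (esq_family av n K yv i)) (av (Suc n)) + (if i = X r then 1 else 0)"
proof (cases i)
  case (X r')
  have "yv r' = yv r \<longleftrightarrow> r' = r" if "K \<le> r'"
    using assms X that inj_onD[OF inj_yv] by blast
  then show ?thesis
    using assms X fresh_yv[OF assms(2,3)] K_le_n
    by (auto simp: lookup_lead_mon_esq_family_av lookup_lead_mon_esq_family_fresh)
qed (use assms fresh_yv in \<open>simp add: lookup_lead_mon_esq_family_av lookup_lead_mon_esq_family_fresh\<close>)

lemma alg_indep_esq_family: "alg_indep I (esq_family av n K yv)"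
proof (rule alg_indep_separated_lead_mons[OF esq_family_nonzero])
  fix t assume t: "t \<in> I"
  have "t = E \<or> (\<exists>r. t = X r \<and> 1 \<le> r)"
    using t vars_I by auto
  then consider "t = E" | r where "t = X r" "1 \<le> r" "r < K" | r where "t = X r" "K \<le> r"
    by (metis not_less)
  then show "\<exists>v w c. 0 < c \<and> (\<forall>i\<in>I. Poly_Mapping.lookup (lead_mon (esq_family av n K yv i)) v =
    Poly_Mapping.lookup (lead_mon (esq_family av n K yv i)) w + (if i = t then c else 0))"
  proof cases
    case 1
    then show ?thesis
      by (intro exI[of _ "av n"] exI[of _ "av (Suc n)"] exI[of _ 1]) (simp add: lead_mon_separates_E)
  next
    case 2
    then show ?thesis
      by (intro exI[of _ "av r"] exI[of _ "av (Suc r)"] exI[of _ 2]) (simp add: lead_mon_separates_esym_sq)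
  next
    case 3
    then show ?thesis using t
      by (intro exI[of _ "yv r"] exI[of _ "av (Suc n)"] exI[of _ 1]) (simp add: lead_mon_separates_fresh)
  qed
qed

end

lemma ell_0 [simp]: "ell av n 0 = 1"
  by (simp add: ell_def f_subst_eq prod_fps_var_dilate_nth_0 f_fps_nth_0)

definition ell_rest :: "(nat \<Rightarrow> 'v) \<Rightarrow> nat \<Rightarrow> nat \<Rightarrow> nat mpoly" where
  "ell_rest av n r = (SOME R. mvars R \<subseteq> {1..r-1} \<and>
    ell av n r - mconst (ell_coeff r) * esym_sq av n r = meval (esym_sq av n) R)"

lemma ell_rest:
  assumes "1 \<le> r"
  shows "mvars (ell_rest av n r) \<subseteq> {1..r-1}"
    and "ell av n r = mconst (ell_coeff r) * esym_sq av n r + meval (esym_sq av n) (ell_rest av n r)"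
proof -
  have "\<exists>R. mvars R \<subseteq> {1..r-1} \<and>
      ell av n r - mconst (ell_coeff r) * esym_sq av n r = meval (esym_sq av n) R"
    using ell_esym_sq[OF assms, where av = av and n = n] unfolding esq_subalg_def by blast
  from someI_ex[OF this] show "mvars (ell_rest av n r) \<subseteq> {1..r-1}"
    and "ell av n r = mconst (ell_coeff r) * esym_sq av n r + meval (esym_sq av n) (ell_rest av n r)"
    unfolding ell_rest_def by (simp_all add: algebra_simps)
qed

definition ell_triangular :: "(nat \<Rightarrow> 'v) \<Rightarrow> nat \<Rightarrow> nat \<Rightarrow> svar \<Rightarrow> svar mpoly" where
  "ell_triangular av n K v = (case v of E \<Rightarrow> mvar E
    | X r \<Rightarrow> if 1 \<le> r \<and> r < K
        then mconst (ell_coeff r) * mvar (X r) + meval (\<lambda>s. mvar (X s)) (ell_rest av n r)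
        else mvar (X r))"

lemma meval_ell_triangular:
  "meval (esq_family av n K yv) (ell_triangular av n K v) = ell_family av n K yv v"
proof (cases v)
  case (X r)
  show ?thesis
  proof (cases "1 \<le> r \<and> r < K")
    case True
    have "meval (\<lambda>s. esq_family av n K yv (X s)) (ell_rest av n r) = meval (esym_sq av n) (ell_rest av n r)"
      using True ell_rest(1)[of r av n] by (intro meval_cong) (auto simp: esq_family_def)
    then show ?thesis
      using X True ell_rest(2)[of r av n]
      by (simp add: ell_triangular_def ell_family_def esq_family_def meval_add meval_mult meval_meval)
  next
    case False
    then show ?thesis
      using X by (cases r) (auto simp: ell_triangular_def ell_family_def esq_family_def)
  qed
qed (simp add: ell_triangular_def ell_family_def esq_family_def)

lemma lead_mon_ell_triangular:
  "ell_triangular av n K v \<noteq> 0 \<and> lead_mon (ell_triangular av n K v) = Poly_Mapping.single v 1"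
proof -
  have "ell_triangular av n K (X r) \<noteq> 0 \<and> lead_mon (ell_triangular av n K (X r)) = Poly_Mapping.single (X r) 1"
    if r: "1 \<le> r" "r < K" for r
  proof -
    let ?top = "mconst (ell_coeff r) * mvar (X r)"
    have top: "?top \<noteq> 0" "lead_mon ?top = Poly_Mapping.single (X r) 1"
      using ell_coeff_nonzero[OF r(1)]
      by (simp_all add: mvar_def mconst_mult_single lead_mon_single)
    have "m < lead_mon ?top" if "m \<in> Poly_Mapping.keys (meval (\<lambda>s. mvar (X s)) (ell_rest av n r))" for m
    proof -
      have "mvars (meval (\<lambda>s. mvar (X s)) (ell_rest av n r)) \<subseteq> X ` {1..r-1}"
        using mvars_meval[of "\<lambda>s. mvar (X s)" "ell_rest av n r"] ell_rest(1)[OF r(1), where av = av and n = n] by auto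
      then have "v' \<in> X ` {1..r-1}" if "v' \<in> Poly_Mapping.keys m" for v'
        using that \<open>m \<in> _\<close> by (auto simp: mvars_def)
      then have "X r < v'" if "v' \<in> Poly_Mapping.keys m" for v'
        using that r(1) by (force simp: less_svar_def)
      then show ?thesis
        unfolding top(2) by (rule less_single_if_keys_greater) simp_all
    qed
    then show ?thesis
      using lead_mon_add_lower[OF top(1)] r top(2) by (simp add: ell_triangular_def)
  qed
  then show ?thesis
    by (cases v) (auto simp: ell_triangular_def lead_mon_mvar)
qed

lemma mvars_ell_triangular:
  "mvars (ell_triangular av n K v) \<subseteq> insert v {X s | s. 1 \<le> s \<and> s < K}"
proof (cases v)
  case (X r)
  show ?thesis
  proof (cases "1 \<le> r \<and> r < K")
    case True
    have "(\<Union>s\<in>mvars (ell_rest av n r). mvars (mvar (X s))) \<subseteq> {X s | s. 1 \<le> s \<and> s < K}"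
      using ell_rest(1)[of r av n] True by force
    then have "mvars (meval (\<lambda>s. mvar (X s)) (ell_rest av n r)) \<subseteq> {X s | s. 1 \<le> s \<and> s < K}"
      by (rule order.trans[OF mvars_meval])
    moreover have "mvars (mconst (ell_coeff r) * mvar (X r)) \<subseteq> {X r}"
      using mvars_mult[of "mconst (ell_coeff r)" "mvar (X r)"] by simp
    ultimately show ?thesis
      using True X mvars_add[of "mconst (ell_coeff r) * mvar (X r)" "meval (\<lambda>s. mvar (X s)) (ell_rest av n r)"]
      unfolding ell_triangular_def by auto
  qed (use X in \<open>auto simp: ell_triangular_def\<close>)
qed (simp add: ell_triangular_def)

theorem alg_indep_ell_family:
  assumes "sigma_family av n K yv I"
  shows "alg_indep I (ell_family av n K yv)"
proof -
  interpret sigma_family av n K yv I by fact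
  define J where "J = I \<union> {X s | s. 1 \<le> s \<and> s < K}"
  have "{r. X r \<in> J \<and> K \<le> r} = {r. X r \<in> I \<and> K \<le> r}"
    by (auto simp: J_def)
  then have "sigma_family av n K yv J"
    using strict_mono_av K_le_n n_pos vars_I fresh_yv inj_yv
    by unfold_locales (auto simp: J_def)
  then have "alg_indep J (esq_family av n K yv)"
    by (rule sigma_family.alg_indep_esq_family)
  moreover have "alg_indep I (ell_triangular av n K)"
    by (rule alg_indep_distinct_vars[where \<phi> = id]) (simp_all add: lead_mon_ell_triangular)
  moreover have "mvars (ell_triangular av n K v) \<subseteq> J" if "v \<in> I" for v
    using mvars_ell_triangular[of av n K v] that by (auto simp: J_def)
  ultimately show ?thesis
    by (rule alg_indep_cong[OF alg_indep_meval]) (simp_all add: meval_ell_triangular)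
qed

lemma nat_ceiling_half_le: "nat \<lceil>real n / 2\<rceil> \<le> n"
  by (simp add: ceiling_le_iff nat_le_iff)

theorem mainTheorem11:
  fixes n k :: nat
  assumes "n \<ge> 2"
    and "k = nat \<lceil>real n / 2\<rceil>"
  shows "alg_indep {0..<k} (\<lambda>i. if i = 0 then sigma_top id n else ell id n i)
    \<and> inj_on (meval (\<lambda>v. case v of
                          E \<Rightarrow> sigma_top A n
                        | X i \<Rightarrow> (if i < k then ell A n i else mvar (Y i))))
        {P. mvars P \<subseteq> {E} \<union> {X i | i. i \<ge> 1}}"
proof
  have k: "k \<le> n" "1 \<le> n"
    using nat_ceiling_half_le[of n] assms by simp_all
  define var :: "nat \<Rightarrow> svar" where "var i = (if i = 0 then E else X i)" for i
  have "sigma_family id n k id ({E} \<union> {X r | r. 1 \<le> r \<and> r < k})"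
    using k by unfold_locales (auto simp: strict_mono_def)
  then have "alg_indep ({E} \<union> {X r | r. 1 \<le> r \<and> r < k}) (ell_family id n k id)"
    by (rule alg_indep_ell_family)
  moreover have "alg_indep {0..<k} (\<lambda>i. mvar (var i))"
    by (rule alg_indep_distinct_vars[where \<phi> = var]) (auto simp: lead_mon_mvar var_def inj_on_def)
  ultimately show "alg_indep {0..<k} (\<lambda>i. if i = 0 then sigma_top id n else ell id n i)"
    by (rule alg_indep_cong[OF alg_indep_meval]) (auto simp: var_def ell_family_def)
  have "sigma_family A n k Y ({E} \<union> {X i | i. i \<ge> 1})"
    using k by unfold_locales (auto simp: strict_mono_A inj_on_def)
  then have "alg_indep ({E} \<union> {X i | i. i \<ge> 1}) (ell_family A n k Y)"
    by (rule alg_indep_ell_family)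
  then show "inj_on (meval (\<lambda>v. case v of
                          E \<Rightarrow> sigma_top A n
                        | X i \<Rightarrow> (if i < k then ell A n i else mvar (Y i))))
        {P. mvars P \<subseteq> {E} \<union> {X i | i. i \<ge> 1}}"
    unfolding ell_family_def by (rule alg_indep_imp_inj_on)
qed

end
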